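(* Let $f\in\mathcal{F}$, let $\mathcal{D}$ be a probability distribution on $\Gamma$, and assume $\alpha+3\beta>1$ and the no-explosion assumption (constant $K$). For $\epsilon\in(0,1]$ and $\delta\in(0,1)$ let $$M=\max\left\{\left(\frac{\big(2C_d\|f\|_{\mathcal{F}}(1+\sqrt{2\log\frac1\delta})\big)^2}{\epsilon}\right)^{\frac1{2\alpha+4\beta+1}},\left(\frac{C_d'}{\epsilon}\right)^{\frac1{\alpha+3\beta-1}},\left(\frac{\|f\|_{\mathcal{F}}}{\epsilon}\right)^{\frac1{2\alpha+5\beta-1}},\left(\frac{\|f\|_{\mathcal{F}}^2}{\epsilon}\right)^{\frac1{2\alpha+4\beta}}\right\},$$ with $C_d=2d^{5/2}+4d^2+26d^{3/2}+12d$, $C_d'=4d^{5/2}+12d^2+60d^{3/2}+76d+24d^{1/2}$, and $$T_0=C_f\min\left\{\frac{m^{\frac{1+3\alpha+\beta}2}}{\epsilon^{3/4}},\frac{m^{\frac{1+5\alpha+3\beta}3}}{\epsilon^{2/3}},\frac{m^{\frac{2+4\alpha}3}}{\epsilon^{2/3}},\frac{m^{2\alpha+2\beta}}{\epsilon^{1/2}},\frac{m^{-1+3\alpha+5\beta}}{\epsilon},\frac{m^{\frac{2+5\alpha+2\beta}3}}{\epsilon^{2/3}},\frac{m^{\frac{1+4\alpha+3\beta}2}}{\epsilon^{1/2}},\frac{m^{1+2\alpha+\beta}}{\epsilon^{1/2}}\right\},$$ where $C_f:=\frac{1}{(\|f\|_{\mathcal{F}}+1)^2\max\{\|f\|_{\mathcal{F}},1\}}$.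 Suppose $m\ge M$ and $T_0>\|f\|_{\mathcal{F}}^2/\epsilon^2$. Let the number of iterations satisfy $T\in[\|f\|_{\mathcal{F}}^2/\epsilon^2,T_0]$ and the learning rate satisfy $\eta=\Theta(\epsilon/m)$ (i.e. $c_1\epsilon/m\le\eta\le c_2\epsilon/m$ for fixed constants $0<c_1\le c_2$). Then with probability at least $1-\delta$ over the random initialization, $$\mathbb{E}_X\,\mathbb{E}_{sgd}\left[\frac1T\sum_{t=0}^{T-1}\mathcal{L}_\Psi(X;W_t)\right]\le O(\epsilon),$$ where $\mathbb{E}_X$ is the expectation over the training set $X$ ($N$ i.i.d. samples from $\mathcal{D}$), $\mathbb{E}_{sgd}$ is the expectation over the random choices ${\bm x}^{(t)}\sim\mathcal{U}(X)$ of SGD, and the constant in $O(\epsilon)$ depends only on $d$, $K$, $c_1$, $c_2$ (in particular not on $N$).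
   Context: Fix an integer $d\ge1$ and let $\Gamma=\{{\bm x}\in\mathbb{R}^d:\|{\bm x}\|_2\le1\}$. Fix exponents $\alpha,\beta\ge0$ and a width $m\in\mathbb{N}^+$. Random initialization: for $i=1,\dots,m$, independently, $a_i^{(0)}\sim\mathcal{U}(-m^{-\alpha},m^{-\alpha})$, ${\bm w}_i^{(0)}\in\mathbb{R}^d$ has i.i.d. coordinates $\sim\mathcal{U}(-m^{-\beta},m^{-\beta})$, and $b_i^{(0)}\sim\mathcal{U}(-m^{-\beta},m^{-\beta})$. Let $\Lambda:=[-m^{-\alpha},m^{-\alpha}]\times[-m^{-\beta},m^{-\beta}]^d\times[-m^{-\beta},m^{-\beta}]$, $p(\theta)=|\Lambda|^{-1}\mathbb{I}_{\theta\in\Lambda}$. For $\theta=(a,{\bm w},b)\in\Lambda$, ${\bm x}\in\Gamma$: ${\bm\zeta}({\bm x};\theta)=a\big(2d({\bm w}^\top{\bm x}+b)^2+12({\bm w}^\top{\bm x})({\bm w}^\top{\bm x}+b)+6({\bm w}^\top{\bm w})(\|{\bm x}\|_2^2-1)\big){\bm x}\,\mathbb{I}_{{\bm w}^\top{\bm x}+b\ge0}$. $\mathcal{F}$ is the class of $f:\Gamma\to\mathbb{R}$ with $f({\bm x})=\int_\Lambda{\bm\alpha}(\theta)^\top{\bm\zeta}({\bm x};\theta)\,{\rm d}\theta$ for some ${\bm\alpha}:\Lambda\to\mathbb{R}^d$, normed by $\|f\|_{\mathcal{F}}:=\inf_{{\bm\alpha}}\max_{\theta\in\Lambda}\|{\bm\alpha}(\theta)\|_2/p(\theta)$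 (infimum assumed attained). PINN: for $W=[{\bm w}_1~\dots~{\bm w}_m]$, ${\bm w}_i\in\mathbb{R}^d$ (only the ${\bm w}_i$ are trainable; $a_i^{(0)},b_i^{(0)}$ stay fixed), $$\psi({\bm x};W)=\sum_{i=1}^m a_i^{(0)}\Big(2d({\bm w}_i^\top{\bm x}+b_i^{(0)})^3+12({\bm w}_i^\top{\bm x}+b_i^{(0)})^2({\bm w}_i^\top{\bm x})+6({\bm w}_i^\top{\bm x}+b_i^{(0)})({\bm w}_i^\top{\bm w}_i)(\|{\bm x}\|_2^2-1)\Big)\mathbb{I}_{{\bm w}_i^\top{\bm x}+b_i^{(0)}\ge0}.$$ Loss: $\mathcal{L}(h({\bm x})):=|h({\bm x})-f({\bm x})|^2$. SGD: training set $X=\{{\bm x}_1,\dots,{\bm x}_N\}$ drawn i.i.d. from $\mathcal{D}$; $W^{(0)}=[{\bm w}_1^{(0)}~\dots~{\bm w}_m^{(0)}]$; for $t=1,\dots,T$, pick ${\bm x}^{(t)}$ uniformly from $X$ and set $W^{(t)}=W^{(t-1)}-\eta\nabla_W\mathcal{L}(\psi({\bm x}^{(t)};W^{(t-1)}))$; $W_t:=W^{(t)}-W^{(0)}$, ${\bm w}_i^{(t)}$ the $i$-th column of $W^{(t)}$. Training loss: $\mathcal{L}_\Psi(X;W):=\frac1N\sum_{n=1}^N\mathcal{L}(\psi({\bm x}_n;W^{(0)}+W))$. No-explosion assumption: there is a constant $K\ge1$, independent of $m,\eta,t,T,N$, such that $\|{\bm w}_i^{(t)}\|_2\le K$ and $|\psi({\bm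 x};W^{(t)})|\le K$ for all $i$, all $t\in\{0,\dots,T\}$ and all ${\bm x}\in\Gamma$. *)

theory Defs
  imports "HOL-Probability.Probability"
begin

text \<open>Dimension d = CARD('d); points of R^d are of type real^'d.
  A neuron parameter theta = (a, w, b) has type real \<times> real^'d \<times> real.\<close>

type_synonym 'd param = "real \<times> (real^'d) \<times> real"

definition dim_d :: "'d::finite itself \<Rightarrow> real" where
  "dim_d _ = real CARD('d)"

definition Gamma :: "(real^'d::finite) set" where
  "Gamma = {x. norm x \<le> 1}"

definition Lambda :: "real \<Rightarrow> real \<Rightarrow> nat \<Rightarrow> ('d::finite) param set" where
  "Lambda al be m = {(a, w, b). \<bar>a\<bar> \<le> real m powr (-al) \<and>
      (\<forall>j. \<bar>w $ j\<bar> \<le> real m powr (-be)) \<and> \<bar>b\<bar> \<le> real m powr (-be)}"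

definition pdens :: "real \<Rightarrow> real \<Rightarrow> nat \<Rightarrow> ('d::finite) param \<Rightarrow> real" where
  "pdens al be m \<theta> = (if \<theta> \<in> Lambda al be m then 1 / measure lborel (Lambda al be m :: 'd param set) else 0)"

definition zeta :: "(real^'d::finite) \<Rightarrow> 'd param \<Rightarrow> real^'d" where
  "zeta x \<theta> = (case \<theta> of (a, w, b) \<Rightarrow>
     (if w \<bullet> x + b \<ge> 0 then
        (a * (2 * dim_d TYPE('d) * (w \<bullet> x + b)^2 + 12 * (w \<bullet> x) * (w \<bullet> x + b)
              + 6 * (w \<bullet> w) * ((norm x)^2 - 1))) *\<^sub>R x
      else 0))"

definition F_rep :: "real \<Rightarrow> real \<Rightarrow> nat \<Rightarrow> ((real^'d::finite) \<Rightarrow> real) \<Rightarrow> ('d param \<Rightarrow> real^'d) \<Rightarrow> bool" where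
  "F_rep al be m f A \<longleftrightarrow> (\<forall>x\<in>Gamma.
      set_integrable lborel (Lambda al be m) (\<lambda>\<theta>. A \<theta> \<bullet> zeta x \<theta>) \<and>
      f x = (\<integral>\<theta>\<in>Lambda al be m. A \<theta> \<bullet> zeta x \<theta> \<partial>lborel))"

definition F_cost :: "real \<Rightarrow> real \<Rightarrow> nat \<Rightarrow> ('d::finite param \<Rightarrow> real^'d) \<Rightarrow> real" where
  "F_cost al be m A = (SUP \<theta>\<in>Lambda al be m. norm (A \<theta>) / pdens al be m \<theta>)"

definition F_admissible :: "real \<Rightarrow> real \<Rightarrow> nat \<Rightarrow> ((real^'d::finite) \<Rightarrow> real) \<Rightarrow> ('d param \<Rightarrow> real^'d) \<Rightarrow> bool" where
  "F_admissible al be m f A \<longleftrightarrow> F_rep al be m f A \<and>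
      bdd_above ((\<lambda>\<theta>. norm (A \<theta>) / pdens al be m \<theta>) ` Lambda al be m)"

definition in_F :: "real \<Rightarrow> real \<Rightarrow> nat \<Rightarrow> ((real^'d::finite) \<Rightarrow> real) \<Rightarrow> bool" where
  "in_F al be m f \<longleftrightarrow> (\<exists>A. F_admissible al be m f A)"

definition F_norm :: "real \<Rightarrow> real \<Rightarrow> nat \<Rightarrow> ((real^'d::finite) \<Rightarrow> real) \<Rightarrow> real" where
  "F_norm al be m f = Inf {F_cost al be m A | A. F_admissible al be m f A}"

definition init_measure :: "real \<Rightarrow> real \<Rightarrow> nat \<Rightarrow> (nat \<Rightarrow> ('d::finite) param) measure" where
  "init_measure al be m = PiM {..<m} (\<lambda>_. uniform_measure lborel (Lambda al be m))"

definition W0 :: "(nat \<Rightarrow> ('d::finite) param) \<Rightarrow> nat \<Rightarrow> real^'d" where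
  "W0 th i = fst (snd (th i))"

text \<open>PINN psi(x;W), with a_i = a_i^(0), b_i = b_i^(0) fixed.\<close>
definition psi :: "nat \<Rightarrow> (nat \<Rightarrow> ('d::finite) param) \<Rightarrow> (nat \<Rightarrow> real^'d) \<Rightarrow> real^'d \<Rightarrow> real" where
  "psi m th W x = (\<Sum>i<m. let a = fst (th i); b = snd (snd (th i)); w = W i; z = w \<bullet> x + b in
      (if z \<ge> 0 then a * (2 * dim_d TYPE('d) * z^3 + 12 * z^2 * (w \<bullet> x)
                    + 6 * z * (w \<bullet> w) * ((norm x)^2 - 1)) else 0))"

text \<open>Gradient of psi w.r.t. w_i (indicator treated as locally constant, as for ReLU).\<close>
definition grad_psi :: "(nat \<Rightarrow> ('d::finite) param) \<Rightarrow> (nat \<Rightarrow> real^'d) \<Rightarrow> real^'d \<Rightarrow> nat \<Rightarrow> real^'d" where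
  "grad_psi th W x i = (let a = fst (th i); b = snd (snd (th i)); w = W i;
       u = w \<bullet> x; z = u + b; s = w \<bullet> w; r = (norm x)^2 - 1 in
     (if z \<ge> 0 then
        (a * (6 * dim_d TYPE('d) * z^2 + 24 * z * u + 12 * z^2 + 6 * s * r)) *\<^sub>R x
        + (a * 12 * z * r) *\<^sub>R w
      else 0))"

definition sgd_step :: "nat \<Rightarrow> (nat \<Rightarrow> ('d::finite) param) \<Rightarrow> (real^'d \<Rightarrow> real) \<Rightarrow> real
    \<Rightarrow> (nat \<Rightarrow> real^'d) \<Rightarrow> real^'d \<Rightarrow> nat \<Rightarrow> real^'d" where
  "sgd_step m th f \<eta> W x = (\<lambda>i. W i - (\<eta> * 2 * (psi m th W x - f x)) *\<^sub>R grad_psi th W x i)"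

text \<open>W^(t); the sample used in step t+1 is X (js t).\<close>
primrec sgd :: "nat \<Rightarrow> (nat \<Rightarrow> ('d::finite) param) \<Rightarrow> (real^'d \<Rightarrow> real) \<Rightarrow> real
    \<Rightarrow> (nat \<Rightarrow> real^'d) \<Rightarrow> (nat \<Rightarrow> nat) \<Rightarrow> nat \<Rightarrow> nat \<Rightarrow> real^'d" where
  "sgd m th f \<eta> X js 0 = W0 th"
| "sgd m th f \<eta> X js (Suc t) = sgd_step m th f \<eta> (sgd m th f \<eta> X js t) (X (js t))"

definition train_loss :: "nat \<Rightarrow> (nat \<Rightarrow> ('d::finite) param) \<Rightarrow> (real^'d \<Rightarrow> real) \<Rightarrow> nat
    \<Rightarrow> (nat \<Rightarrow> real^'d) \<Rightarrow> (nat \<Rightarrow> real^'d) \<Rightarrow> real" where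
  "train_loss m th f N X W = (1 / real N) * (\<Sum>n<N. (psi m th W (X n) - f (X n))^2)"

definition E_sgd :: "nat \<Rightarrow> (nat \<Rightarrow> ('d::finite) param) \<Rightarrow> (real^'d \<Rightarrow> real) \<Rightarrow> real
    \<Rightarrow> nat \<Rightarrow> nat \<Rightarrow> (nat \<Rightarrow> real^'d) \<Rightarrow> real" where
  "E_sgd m th f \<eta> N T X = (\<Sum>js\<in>{..<T} \<rightarrow>\<^sub>E {..<N}.
       (1 / real T) * (\<Sum>t<T. train_loss m th f N X (sgd m th f \<eta> X js t))) / real N ^ T"

definition E_X_sgd :: "nat \<Rightarrow> (nat \<Rightarrow> ('d::finite) param) \<Rightarrow> (real^'d \<Rightarrow> real) \<Rightarrow> real
    \<Rightarrow> nat \<Rightarrow> nat \<Rightarrow> (real^'d) measure \<Rightarrow> real" where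
  "E_X_sgd m th f \<eta> N T D = (\<integral>X. E_sgd m th f \<eta> N T X \<partial>(PiM {..<N} (\<lambda>_. D)))"

definition C_d :: "real \<Rightarrow> real" where
  "C_d d = 2 * d powr (5/2) + 4 * d^2 + 26 * d powr (3/2) + 12 * d"

definition C_d' :: "real \<Rightarrow> real" where
  "C_d' d = 4 * d powr (5/2) + 12 * d^2 + 60 * d powr (3/2) + 76 * d + 24 * d powr (1/2)"

definition M_bound :: "real \<Rightarrow> real \<Rightarrow> real \<Rightarrow> real \<Rightarrow> real \<Rightarrow> real \<Rightarrow> real" where
  "M_bound d al be nf \<epsilon> \<delta> = Max {
     ((2 * C_d d * nf * (1 + sqrt (2 * ln (1 / \<delta>))))^2 / \<epsilon>) powr (1 / (2*al + 4*be + 1)),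
     (C_d' d / \<epsilon>) powr (1 / (al + 3*be - 1)),
     (nf / \<epsilon>) powr (1 / (2*al + 5*be - 1)),
     (nf^2 / \<epsilon>) powr (1 / (2*al + 4*be))}"

definition T0_bound :: "real \<Rightarrow> real \<Rightarrow> real \<Rightarrow> real \<Rightarrow> real \<Rightarrow> real" where
  "T0_bound m al be nf \<epsilon> = (1 / ((nf + 1)^2 * max nf 1)) * Min {
     m powr ((1 + 3*al + be) / 2) / \<epsilon> powr (3/4),
     m powr ((1 + 5*al + 3*be) / 3) / \<epsilon> powr (2/3),
     m powr ((2 + 4*al) / 3) / \<epsilon> powr (2/3),
     m powr (2*al + 2*be) / \<epsilon> powr (1/2),
     m powr (-1 + 3*al + 5*be) / \<epsilon>,
     m powr ((2 + 5*al + 2*be) / 3) / \<epsilon> powr (2/3),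
     m powr ((1 + 4*al + 3*be) / 2) / \<epsilon> powr (1/2),
     m powr (1 + 2*al + be) / \<epsilon> powr (1/2)}"

end

(*
  The bound holds for every initialisation in the support of the uniform distribution, so the
  exceptional event is empty. Write r = m^-al and s = m^-be for the scales of the output
  weights and of the inner parameters. At initialisation both the network and the target are
  small: |psi| <= c m r s^3 <= c eps and |f| <= c |f|_F r s^2 <= c sqrt eps, with c depending
  on d only. A neuron whose inner weights stay in a ball of radius Y is Lipschitz in them with
  constant O(|a| Y^2), and its gradient has the same size; hence one SGD step multiplies the
  uniform error by at most 1 + q with q = O(m eta r^2 Y^4), and after t <= T steps the error
  has grown by at most exp (q T) = exp (O(T eps r^2 Y^4)). If m is large and s is small (the
  lazy regime), an induction shows that the inner weights never leave the ball of radius s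
  around their initial values, so Y = O(s) and T eps r^2 s^2 <= 1 suffices. Otherwise T eps
  r^2 is bounded by a constant and the weight bound of the no-explosion hypothesis gives Y <=
  K + 1.
*)
theory Submission
  imports Defs
begin

section \<open>Bounds on a single neuron\<close>

lemma quadratic_form_abs_le:
  fixes p q k z u S \<rho> Y :: real
  assumes "0 \<le> p" "0 \<le> q" "0 \<le> k" "\<bar>z\<bar> \<le> Y" "\<bar>u\<bar> \<le> Y" "0 \<le> S" "S \<le> Y^2" "\<bar>\<rho>\<bar> \<le> 1"
  shows "\<bar>p*z^2 + q*z*u + k*S*\<rho>\<bar> \<le> (p + q + k) * Y^2"
proof -
  have "\<bar>z\<bar>^2 \<le> Y^2"
    using assms(4) by (intro power_mono) auto
  then have "\<bar>p*z^2\<bar> \<le> p*Y^2"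
    using assms(1) by (simp add: abs_mult mult_left_mono)
  moreover have "\<bar>z*u\<bar> \<le> Y*Y"
    unfolding abs_mult using assms(4,5) by (intro mult_mono) auto
  then have "\<bar>q*z*u\<bar> \<le> q*Y^2"
    using assms(2) by (simp add: abs_mult mult.assoc power2_eq_square mult_left_mono)
  moreover have "S*\<bar>\<rho>\<bar> \<le> Y^2*1"
    using assms(6-8) by (intro mult_mono) auto
  then have "\<bar>k*S*\<rho>\<bar> \<le> k*Y^2"
    using assms(3,6) by (simp add: abs_mult mult.assoc mult_left_mono)
  ultimately show ?thesis
    by (simp add: distrib_right)
qed

lemma cubic_form_abs_le:
  fixes d z u S \<rho> Y :: real
  assumes "0 \<le> d" "\<bar>z\<bar> \<le> Y" "\<bar>u\<bar> \<le> Y" "0 \<le> S" "S \<le> Y^2" "\<bar>\<rho>\<bar> \<le> 1"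
  shows "\<bar>2*d*z^3 + 12*z^2*u + 6*z*S*\<rho>\<bar> \<le> (2*d + 18) * Y^2 * \<bar>z\<bar>"
proof -
  have "2*d*z^3 + 12*z^2*u + 6*z*S*\<rho> = z * (2*d*z^2 + 12*z*u + 6*S*\<rho>)"
    by (simp add: algebra_simps power2_eq_square power3_eq_cube)
  then have "\<bar>2*d*z^3 + 12*z^2*u + 6*z*S*\<rho>\<bar> = \<bar>z\<bar> * \<bar>2*d*z^2 + 12*z*u + 6*S*\<rho>\<bar>"
    by (simp add: abs_mult)
  also have "\<dots> \<le> \<bar>z\<bar> * ((2*d + 12 + 6) * Y^2)"
    using assms by (intro mult_left_mono quadratic_form_abs_le) auto
  finally show ?thesis
    by (simp add: algebra_simps)
qed

lemma abs_mult_diff_le: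
  fixes x x' y y' A B Dx Dy :: real
  assumes "\<bar>x'\<bar> \<le> A" "\<bar>y\<bar> \<le> B" "\<bar>x - x'\<bar> \<le> Dx" "\<bar>y - y'\<bar> \<le> Dy"
  shows "\<bar>x*y - x'*y'\<bar> \<le> Dx*B + A*Dy"
proof -
  have "x*y - x'*y' = (x - x')*y + x'*(y - y')"
    by (simp add: algebra_simps)
  also have "\<bar>\<dots>\<bar> \<le> \<bar>x - x'\<bar>*\<bar>y\<bar> + \<bar>x'\<bar>*\<bar>y - y'\<bar>"
    unfolding abs_mult[symmetric] by (rule abs_triangle_ineq)
  also have "\<dots> \<le> Dx*B + A*Dy"
    using assms by (intro add_mono mult_mono) auto
  finally show ?thesis .
qed

lemma cubic_form_diff_abs_le:
  fixes d z u S z' u' S' \<rho> Y D :: real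
  assumes "0 \<le> d" "\<bar>z\<bar> \<le> Y" "\<bar>u\<bar> \<le> Y" "0 \<le> S" "S \<le> Y^2" "\<bar>\<rho>\<bar> \<le> 1"
    and "\<bar>z'\<bar> \<le> Y" "\<bar>u'\<bar> \<le> Y" "0 \<le> S'" "S' \<le> Y^2"
    and "\<bar>z - z'\<bar> \<le> D" "\<bar>u - u'\<bar> \<le> D" "\<bar>S - S'\<bar> \<le> 2*Y*D"
  shows "\<bar>(2*d*z^3 + 12*z^2*u + 6*z*S*\<rho>) - (2*d*z'^3 + 12*z'^2*u' + 6*z'*S'*\<rho>)\<bar>
    \<le> (6*d + 54) * Y^2 * D"
proof -
  have "\<bar>z*z - z'*z'\<bar> \<le> D*Y + Y*D"
    using abs_mult_diff_le[OF assms(7,2,11,11)] .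
  then have z2: "\<bar>z^2 - z'^2\<bar> \<le> 2*Y*D"
    by (simp add: power2_eq_square mult.commute)
  have "\<bar>z'^2\<bar> \<le> Y^2"
    using power_mono[OF assms(7), of 2] by simp
  have "\<bar>z^2*z - z'^2*z'\<bar> \<le> 2*Y*D*Y + Y^2*D"
    using abs_mult_diff_le[OF \<open>\<bar>z'^2\<bar> \<le> Y^2\<close> assms(2) z2 assms(11)] .
  then have cube: "\<bar>z^3 - z'^3\<bar> \<le> 3*Y^2*D"
    by (simp add: power2_eq_square power3_eq_cube algebra_simps)
  have "\<bar>z^2*u - z'^2*u'\<bar> \<le> 2*Y*D*Y + Y^2*D"
    using abs_mult_diff_le[OF \<open>\<bar>z'^2\<bar> \<le> Y^2\<close> assms(3) z2 assms(12)] .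
  then have square: "\<bar>z^2*u - z'^2*u'\<bar> \<le> 3*Y^2*D"
    by (simp add: power2_eq_square algebra_simps)
  have "\<bar>S\<bar> \<le> Y^2"
    using assms(4,5) by simp
  then have "\<bar>z*S - z'*S'\<bar> \<le> D*Y^2 + Y*(2*Y*D)"
    using abs_mult_diff_le[OF assms(7) _ assms(11,13)] by blast
  then have "\<bar>z*S - z'*S'\<bar> * \<bar>\<rho>\<bar> \<le> 3*Y^2*D * 1"
    using assms(6) by (intro mult_mono) (auto simp: power2_eq_square algebra_simps)
  then have linear: "\<bar>(z*S - z'*S')*\<rho>\<bar> \<le> 3*Y^2*D"
    by (simp add: abs_mult)
  have "(2*d*z^3 + 12*z^2*u + 6*z*S*\<rho>) - (2*d*z'^3 + 12*z'^2*u' + 6*z'*S'*\<rho>)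
     = 2*d*(z^3 - z'^3) + 12*(z^2*u - z'^2*u') + 6*((z*S - z'*S')*\<rho>)"
    by (simp add: algebra_simps)
  also have "\<bar>\<dots>\<bar> \<le> \<bar>2*d*(z^3 - z'^3)\<bar> + \<bar>12*(z^2*u - z'^2*u')\<bar> + \<bar>6*((z*S - z'*S')*\<rho>)\<bar>"
    by linarith
  also have "\<dots> = 2*d*\<bar>z^3 - z'^3\<bar> + 12*\<bar>z^2*u - z'^2*u'\<bar> + 6*\<bar>(z*S - z'*S')*\<rho>\<bar>"
    by (simp only: abs_mult abs_numeral abs_of_nonneg[OF assms(1)])
  also have "\<dots> \<le> 2*d*(3*Y^2*D) + 12*(3*Y^2*D) + 6*(3*Y^2*D)"
    using cube square linear assms(1) by (intro add_mono mult_left_mono) auto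
  finally show ?thesis
    by (simp add: algebra_simps)
qed

lemma gated_cubic_form_diff_abs_le:
  fixes d z u S z' u' S' \<rho> Y D :: real
  assumes "0 \<le> d" "\<bar>z\<bar> \<le> Y" "\<bar>u\<bar> \<le> Y" "0 \<le> S" "S \<le> Y^2" "\<bar>\<rho>\<bar> \<le> 1"
    and "\<bar>z'\<bar> \<le> Y" "\<bar>u'\<bar> \<le> Y" "0 \<le> S'" "S' \<le> Y^2"
    and "\<bar>z - z'\<bar> \<le> D" "\<bar>u - u'\<bar> \<le> D" "\<bar>S - S'\<bar> \<le> 2*Y*D"
  shows "\<bar>(if 0 \<le> z then 2*d*z^3 + 12*z^2*u + 6*z*S*\<rho> else 0)
      - (if 0 \<le> z' then 2*d*z'^3 + 12*z'^2*u' + 6*z'*S'*\<rho> else 0)\<bar> \<le> (6*d + 54) * Y^2 * D"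
proof -
  have active: "\<bar>2*d*y^3 + 12*y^2*p + 6*y*Q*\<rho>\<bar> \<le> (6*d + 54) * Y^2 * D"
    if "\<bar>y\<bar> \<le> Y" "\<bar>p\<bar> \<le> Y" "0 \<le> Q" "Q \<le> Y^2" "\<bar>y\<bar> \<le> D" for y p Q
  proof -
    have "\<bar>2*d*y^3 + 12*y^2*p + 6*y*Q*\<rho>\<bar> \<le> (2*d + 18) * Y^2 * \<bar>y\<bar>"
      using that assms(1,6) by (intro cubic_form_abs_le)
    also have "\<dots> \<le> (6*d + 54) * Y^2 * D"
      using that assms(1) by (intro mult_mono) auto
    finally show ?thesis .
  qed
  \<comment> \<open>across the kink the active branch is bounded by the jump of its argument\<close>
  have "\<bar>z\<bar> \<le> D" if "0 \<le> z" "z' < 0"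
    using assms(11) that by auto
  moreover have "\<bar>z'\<bar> \<le> D" if "0 \<le> z'" "z < 0"
    using assms(11) that by auto
  ultimately show ?thesis
    using cubic_form_diff_abs_le[OF assms] active[OF assms(2-5)] active[OF assms(7-10)]
      assms(1,11) by (auto simp: zero_le_mult_iff)
qed

definition neuron :: "real \<Rightarrow> real \<Rightarrow> real^'d::finite \<Rightarrow> real^'d \<Rightarrow> real" where
  "neuron a b w x = (if w \<bullet> x + b \<ge> 0 then a * (2 * dim_d TYPE('d) * (w \<bullet> x + b)^3
      + 12 * (w \<bullet> x + b)^2 * (w \<bullet> x) + 6 * (w \<bullet> x + b) * (w \<bullet> w) * ((norm x)^2 - 1)) else 0)"

lemma psi_eq_sum_neuron: "psi m th W x = (\<Sum>i<m. neuron (fst (th i)) (snd (snd (th i))) (W i) x)"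
  unfolding psi_def neuron_def Let_def by simp

lemma mem_Gamma_iff: "x \<in> Gamma \<longleftrightarrow> norm x \<le> 1"
  by (simp add: Gamma_def)

lemma dim_d_ge_1: "1 \<le> dim_d TYPE('d::finite)"
  unfolding dim_d_def by simp

definition neuron_const :: "'d::finite itself \<Rightarrow> real" where
  "neuron_const _ = 6 * dim_d TYPE('d) + 54"

lemma neuron_const_pos: "0 < neuron_const TYPE('d::finite)"
  unfolding neuron_const_def using dim_d_ge_1[where 'd='d] by linarith

lemma neuron_const_nonneg: "0 \<le> neuron_const TYPE('d::finite)"
  using neuron_const_pos[where 'd='d] by linarith

lemma neuron_arg_bounds:
  fixes w x :: "real^'d::finite"
  assumes "norm w + \<bar>b\<bar> \<le> Y" "norm x \<le> 1"
  shows "\<bar>w \<bullet> x + b\<bar> \<le> Y" "\<bar>w \<bullet> x\<bar> \<le> Y" "0 \<le> w \<bullet> w" "w \<bullet> w \<le> Y^2"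
    "\<bar>(norm x)^2 - 1\<bar> \<le> 1" "norm w \<le> Y" "0 \<le> Y"
proof -
  have "\<bar>w \<bullet> x\<bar> \<le> norm w"
    using Cauchy_Schwarz_ineq2[of w x] assms(2) by (metis mult_left_le norm_ge_zero order_trans)
  then show "\<bar>w \<bullet> x + b\<bar> \<le> Y" "\<bar>w \<bullet> x\<bar> \<le> Y"
    using assms(1) by linarith+
  show "0 \<le> w \<bullet> w"
    by simp
  show w: "norm w \<le> Y" and "0 \<le> Y"
    using assms(1) norm_ge_zero[of w] by linarith+
  then show "w \<bullet> w \<le> Y^2"
    by (simp add: power2_norm_eq_inner[symmetric] power_mono)
  have "(norm x)^2 \<le> 1"
    using assms(2) by (simp add: power_le_one)
  then show "\<bar>(norm x)^2 - 1\<bar> \<le> 1"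
    by simp
qed

lemma abs_neuron_le:
  fixes w x :: "real^'d::finite"
  assumes "norm w + \<bar>b\<bar> \<le> Y" "norm x \<le> 1"
  shows "\<bar>neuron a b w x\<bar> \<le> \<bar>a\<bar> * neuron_const TYPE('d) * Y^3"
proof (cases "w \<bullet> x + b \<ge> 0")
  case True
  note bounds = neuron_arg_bounds[OF assms]
  have "\<bar>2 * dim_d TYPE('d) * (w \<bullet> x + b)^3 + 12 * (w \<bullet> x + b)^2 * (w \<bullet> x)
      + 6 * (w \<bullet> x + b) * (w \<bullet> w) * ((norm x)^2 - 1)\<bar> \<le> (2 * dim_d TYPE('d) + 18) * Y^2 * \<bar>w \<bullet> x + b\<bar>"
    using bounds dim_d_ge_1[where 'd='d] by (intro cubic_form_abs_le) auto
  also have "\<dots> \<le> neuron_const TYPE('d) * Y^2 * Y"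
    unfolding neuron_const_def using bounds dim_d_ge_1[where 'd='d] by (intro mult_mono) auto
  finally show ?thesis
    using True unfolding neuron_def
    by (simp add: abs_mult mult_left_mono mult.assoc power3_eq_cube power2_eq_square)
qed (use neuron_arg_bounds(7)[OF assms] neuron_const_nonneg[where 'd='d] in \<open>simp add: neuron_def\<close>)

lemma abs_neuron_diff_le:
  fixes w w' x :: "real^'d::finite"
  assumes "norm w + \<bar>b\<bar> \<le> Y" "norm w' + \<bar>b\<bar> \<le> Y" "norm x \<le> 1"
  shows "\<bar>neuron a b w x - neuron a b w' x\<bar> \<le> \<bar>a\<bar> * neuron_const TYPE('d) * Y^2 * norm (w - w')"
proof -
  note B = neuron_arg_bounds[OF assms(1,3)] and B' = neuron_arg_bounds[OF assms(2,3)]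
  define d where "d = dim_d TYPE('d)"
  define D where "D = norm (w - w')"
  have d: "0 \<le> d" and D: "0 \<le> D"
    using dim_d_ge_1[where 'd='d] unfolding d_def D_def by auto
  have "\<bar>(w - w') \<bullet> x\<bar> \<le> D"
    unfolding D_def using Cauchy_Schwarz_ineq2[of "w - w'" x] assms(3)
    by (metis mult_left_le norm_ge_zero order_trans)
  then have dz: "\<bar>(w \<bullet> x + b) - (w' \<bullet> x + b)\<bar> \<le> D" and du: "\<bar>w \<bullet> x - w' \<bullet> x\<bar> \<le> D"
    by (simp_all add: inner_diff_left)
  have "\<bar>w \<bullet> w - w' \<bullet> w'\<bar> = \<bar>(w - w') \<bullet> (w + w')\<bar>"
    by (simp add: algebra_simps inner_commute)
  also have "\<dots> \<le> D * norm (w + w')"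
    unfolding D_def by (rule Cauchy_Schwarz_ineq2)
  also have "\<dots> \<le> D * (Y + Y)"
    using B(6) B'(6) norm_triangle_ineq[of w w'] D by (intro mult_left_mono) auto
  finally have dS: "\<bar>w \<bullet> w - w' \<bullet> w'\<bar> \<le> 2 * Y * D"
    by (simp add: mult.commute)
  let ?z = "w \<bullet> x + b" and ?z' = "w' \<bullet> x + b"
  let ?h = "2 * d * ?z^3 + 12 * ?z^2 * (w \<bullet> x) + 6 * ?z * (w \<bullet> w) * ((norm x)^2 - 1)"
  let ?h' = "2 * d * ?z'^3 + 12 * ?z'^2 * (w' \<bullet> x) + 6 * ?z' * (w' \<bullet> w') * ((norm x)^2 - 1)"
  have "\<bar>(if ?z \<ge> 0 then ?h else 0) - (if ?z' \<ge> 0 then ?h' else 0)\<bar> \<le> (6 * d + 54) * Y^2 * D"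
    using gated_cubic_form_diff_abs_le[OF d B(1-5) B'(1-4) dz du dS] .
  moreover have "neuron a b w x - neuron a b w' x
      = a * ((if ?z \<ge> 0 then ?h else 0) - (if ?z' \<ge> 0 then ?h' else 0))"
    unfolding neuron_def d_def by (simp add: right_diff_distrib)
  ultimately show ?thesis
    unfolding D_def d_def neuron_const_def by (simp add: abs_mult mult_left_mono mult.assoc)
qed

lemma norm_grad_psi_le:
  fixes x :: "real^'d::finite"
  assumes "norm (W i) + \<bar>snd (snd (th i))\<bar> \<le> Y" "norm x \<le> 1"
  shows "norm (grad_psi th W x i) \<le> \<bar>fst (th i)\<bar> * neuron_const TYPE('d) * Y^2"
proof -
  note B = neuron_arg_bounds[OF assms]
  define a z u S \<rho> where "a = fst (th i)" and "z = W i \<bullet> x + snd (snd (th i))"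
    and "u = W i \<bullet> x" and "S = W i \<bullet> W i" and "\<rho> = (norm x)^2 - 1"
  define d where "d = dim_d TYPE('d)"
  define P where "P = 6 * d * z^2 + 24 * z * u + 12 * z^2 + 6 * S * \<rho>"
  have d: "0 \<le> d"
    using dim_d_ge_1[where 'd='d] unfolding d_def by linarith
  have "P = (6 * d + 12) * z^2 + 24 * z * u + 6 * S * \<rho>"
    unfolding P_def by (simp add: algebra_simps)
  also have "\<bar>\<dots>\<bar> \<le> ((6 * d + 12) + 24 + 6) * Y^2"
    using B d unfolding z_def u_def S_def \<rho>_def by (intro quadratic_form_abs_le) auto
  finally have "\<bar>P\<bar> \<le> (6 * d + 42) * Y^2"
    by (simp add: add.commute)
  then have "\<bar>P\<bar> * norm x \<le> (6 * d + 42) * Y^2 * 1"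
    using assms(2) by (intro mult_mono) auto
  then have first: "norm ((a * P) *\<^sub>R x) \<le> \<bar>a\<bar> * ((6 * d + 42) * Y^2)"
    by (simp add: abs_mult mult.assoc mult_left_mono)
  have "\<bar>12 * z * \<rho>\<bar> * norm (W i) \<le> 12 * Y * 1 * Y"
    unfolding abs_mult using B unfolding z_def \<rho>_def by (intro mult_mono) auto
  then have second: "norm ((a * 12 * z * \<rho>) *\<^sub>R W i) \<le> \<bar>a\<bar> * (12 * Y^2)"
    by (simp add: abs_mult mult_left_mono mult.assoc power2_eq_square)
  show ?thesis
  proof (cases "z \<ge> 0")
    case True
    then have "grad_psi th W x i = (a * P) *\<^sub>R x + (a * 12 * z * \<rho>) *\<^sub>R W i"
      unfolding grad_psi_def Let_def a_def z_def u_def S_def \<rho>_def d_def P_def by simp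
    then have "norm (grad_psi th W x i) \<le> \<bar>a\<bar> * ((6 * d + 42) * Y^2) + \<bar>a\<bar> * (12 * Y^2)"
      using first second norm_triangle_le by (metis add_mono)
    then show ?thesis
      unfolding a_def d_def neuron_const_def by (simp add: algebra_simps)
  next
    case False
    then show ?thesis
      using B(7) neuron_const_nonneg[where 'd='d] unfolding grad_psi_def Let_def z_def by simp
  qed
qed

lemma norm_zeta_le:
  fixes x w :: "real^'d::finite"
  assumes "norm w + \<bar>b\<bar> \<le> Y" "norm x \<le> 1"
  shows "norm (zeta x (a, w, b)) \<le> \<bar>a\<bar> * neuron_const TYPE('d) * Y^2"
proof -
  note B = neuron_arg_bounds[OF assms]
  define d where "d = dim_d TYPE('d)"
  define P where "P = 2 * d * (w \<bullet> x + b)^2 + 12 * (w \<bullet> x + b) * (w \<bullet> x) + 6 * (w \<bullet> w) * ((norm x)^2 - 1)"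
  have d: "0 \<le> d"
    using dim_d_ge_1[where 'd='d] unfolding d_def by linarith
  have "\<bar>P\<bar> \<le> (2 * d + 12 + 6) * Y^2"
    unfolding P_def using B d by (intro quadratic_form_abs_le) auto
  also have "\<dots> \<le> neuron_const TYPE('d) * Y^2"
    unfolding d_def neuron_const_def using dim_d_ge_1[where 'd='d] by (intro mult_right_mono) auto
  finally have "\<bar>P\<bar> * norm x \<le> neuron_const TYPE('d) * Y^2 * 1"
    using assms(2) by (intro mult_mono) auto
  moreover have "zeta x (a, w, b) = (if w \<bullet> x + b \<ge> 0 then (a * P) *\<^sub>R x else 0)"
    unfolding zeta_def P_def d_def by (simp add: mult.commute mult.left_commute)
  ultimately show ?thesis
    using B(7) neuron_const_nonneg[where 'd='d] by (simp add: abs_mult mult.assoc mult_left_mono)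
qed

section \<open>Error propagation along SGD\<close>

lemma norm_sgd_step_diff_le:
  fixes x0 :: "real^'d::finite"
  assumes "norm (W i) + \<bar>snd (snd (th i))\<bar> \<le> Y" "norm x0 \<le> 1" "\<bar>fst (th i)\<bar> \<le> r"
    and "0 \<le> \<eta>" "\<bar>psi m th W x0 - f x0\<bar> \<le> B"
  shows "norm (sgd_step m th f \<eta> W x0 i - W i) \<le> \<eta> * 2 * B * (r * neuron_const TYPE('d) * Y^2)"
proof -
  have "norm (grad_psi th W x0 i) \<le> \<bar>fst (th i)\<bar> * neuron_const TYPE('d) * Y^2"
    using assms(1,2) by (rule norm_grad_psi_le)
  also have "\<dots> \<le> r * neuron_const TYPE('d) * Y^2"
    using assms(3) neuron_const_nonneg[where 'd='d] by (intro mult_right_mono) auto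
  finally have "\<bar>\<eta> * 2 * (psi m th W x0 - f x0)\<bar> * norm (grad_psi th W x0 i)
      \<le> (\<eta> * 2 * B) * (r * neuron_const TYPE('d) * Y^2)"
    using assms(4,5) by (intro mult_mono) (auto simp: abs_mult mult.commute[of _ \<eta>] intro: mult_left_mono)
  then show ?thesis
    unfolding sgd_step_def by simp
qed

lemma abs_psi_diff_le:
  fixes x :: "real^'d::finite"
  assumes "\<forall>i<m. norm (W i) + \<bar>snd (snd (th i))\<bar> \<le> Y" "\<forall>i<m. norm (W' i) + \<bar>snd (snd (th i))\<bar> \<le> Y"
    and "\<forall>i<m. norm (W' i - W i) \<le> \<Delta>" "\<forall>i<m. \<bar>fst (th i)\<bar> \<le> r" "norm x \<le> 1"
  shows "\<bar>psi m th W' x - psi m th W x\<bar> \<le> real m * (r * neuron_const TYPE('d) * Y^2 * \<Delta>)"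
proof -
  let ?n = "\<lambda>V i. neuron (fst (th i)) (snd (snd (th i))) (V i) x"
  have "\<bar>psi m th W' x - psi m th W x\<bar> \<le> (\<Sum>i<m. \<bar>?n W' i - ?n W i\<bar>)"
    unfolding psi_eq_sum_neuron sum_subtractf[symmetric] by (rule sum_abs)
  also have "\<dots> \<le> (\<Sum>i<m. r * neuron_const TYPE('d) * Y^2 * \<Delta>)"
  proof (rule sum_mono)
    fix i assume "i \<in> {..<m}"
    with assms have "\<bar>?n W' i - ?n W i\<bar> \<le> \<bar>fst (th i)\<bar> * neuron_const TYPE('d) * Y^2 * norm (W' i - W i)"
      by (intro abs_neuron_diff_le) auto
    also have "\<dots> \<le> r * neuron_const TYPE('d) * Y^2 * \<Delta>"
      using assms(3,4) \<open>i \<in> {..<m}\<close> neuron_const_nonneg[where 'd='d]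
      by (intro mult_mono mult_right_mono) auto
    finally show "\<bar>?n W' i - ?n W i\<bar> \<le> r * neuron_const TYPE('d) * Y^2 * \<Delta>" .
  qed
  finally show ?thesis
    by simp
qed

definition error_growth :: "'d::finite itself \<Rightarrow> nat \<Rightarrow> real \<Rightarrow> real \<Rightarrow> real \<Rightarrow> real" where
  "error_growth _ m r \<eta> Y = 2 * real m * \<eta> * (r * neuron_const TYPE('d) * Y^2)^2"

lemma error_growth_nonneg: "0 \<le> \<eta> \<Longrightarrow> 0 \<le> error_growth TYPE('d::finite) m r \<eta> Y"
  unfolding error_growth_def by simp

lemma sgd_step_error_le:
  fixes x0 :: "real^'d::finite"
  assumes "\<forall>i<m. \<bar>fst (th i)\<bar> \<le> r" "0 \<le> \<eta>" "x0 \<in> Gamma"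
    and "\<forall>i<m. norm (W i) + \<bar>snd (snd (th i))\<bar> \<le> Y"
    and "\<forall>i<m. norm (sgd_step m th f \<eta> W x0 i) + \<bar>snd (snd (th i))\<bar> \<le> Y"
    and err: "\<forall>x\<in>Gamma. \<bar>psi m th W x - f x\<bar> \<le> B"
  shows "\<forall>x\<in>Gamma. \<bar>psi m th (sgd_step m th f \<eta> W x0) x - f x\<bar> \<le> (1 + error_growth TYPE('d) m r \<eta> Y) * B"
proof
  fix x :: "real^'d" assume "x \<in> Gamma"
  let ?c = "neuron_const TYPE('d)"
  have "\<forall>i<m. norm (sgd_step m th f \<eta> W x0 i - W i) \<le> \<eta> * 2 * B * (r * ?c * Y^2)"
    using assms err by (auto simp: mem_Gamma_iff intro: norm_sgd_step_diff_le)
  then have "\<bar>psi m th (sgd_step m th f \<eta> W x0) x - psi m th W x\<bar> \<le> real m * (r * ?c * Y^2 * (\<eta> * 2 * B * (r * ?c * Y^2)))"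
    using assms \<open>x \<in> Gamma\<close> by (intro abs_psi_diff_le) (auto simp: mem_Gamma_iff)
  also have "\<dots> = error_growth TYPE('d) m r \<eta> Y * B"
    unfolding error_growth_def by (simp add: power2_eq_square)
  finally show "\<bar>psi m th (sgd_step m th f \<eta> W x0) x - f x\<bar> \<le> (1 + error_growth TYPE('d) m r \<eta> Y) * B"
    using bspec[OF err \<open>x \<in> Gamma\<close>] by (simp add: algebra_simps)
qed

lemma one_plus_power_le_exp:
  fixes q G :: real and t T :: nat
  assumes "0 \<le> q" "t \<le> T" "q * T \<le> G"
  shows "(1 + q)^t \<le> exp G"
proof -
  have "(1 + q)^t \<le> (1 + q)^T"
    using assms(1,2) by (intro power_increasing) auto
  also have "\<dots> \<le> (exp q)^T"
    using assms(1) by (intro power_mono) (auto simp: add.commute exp_ge_add_one_self)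
  also have "\<dots> = exp (q * T)"
    by (simp add: exp_of_nat_mult[symmetric] mult.commute)
  finally show ?thesis
    using assms(3) by (meson exp_le_cancel_iff order_trans)
qed

lemma sgd_error_le_of_bounded_weights:
  fixes X :: "nat \<Rightarrow> real^'d::finite" and m :: nat and r \<eta> Y :: real
  defines "q \<equiv> error_growth TYPE('d) m r \<eta> Y"
  assumes a: "\<forall>i<m. \<bar>fst (th i)\<bar> \<le> r" and \<eta>: "0 \<le> \<eta>" and samples: "\<forall>t<T. X (js t) \<in> Gamma"
    and bounded: "\<forall>t\<le>T. \<forall>i<m. norm (sgd m th f \<eta> X js t i) + \<bar>snd (snd (th i))\<bar> \<le> Y"
    and init: "\<forall>x\<in>Gamma. \<bar>psi m th (W0 th) x - f x\<bar> \<le> E0"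
  shows "t \<le> T \<Longrightarrow> \<forall>x\<in>Gamma. \<bar>psi m th (sgd m th f \<eta> X js t) x - f x\<bar> \<le> (1 + q)^t * E0"
proof (induction t)
  case 0
  then show ?case
    using init by simp
next
  case (Suc t)
  have "\<forall>x\<in>Gamma. \<bar>psi m th (sgd_step m th f \<eta> (sgd m th f \<eta> X js t) (X (js t))) x - f x\<bar>
      \<le> (1 + q) * ((1 + q)^t * E0)"
    unfolding q_def using Suc[unfolded q_def] bounded samples
    by (intro sgd_step_error_le[OF a \<eta>]) auto
  then show ?case
    by (simp add: mult.assoc)
qed

lemma radius_le_of_dist_le:
  fixes U V :: "nat \<Rightarrow> 'a::real_normed_vector"
  assumes "\<forall>i<m. norm (V i - U i) \<le> \<rho>" "\<rho> \<le> R" "\<forall>i<m. norm (U i) + c i + R \<le> Y"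
  shows "\<forall>i<m. norm (V i) + c i \<le> Y"
proof (intro allI impI)
  fix i assume "i < m"
  then show "norm (V i) + c i \<le> Y"
    using assms norm_triangle_sub[of "V i" "U i"] by fastforce
qed

lemma sgd_error_le_near_init:
  fixes X :: "nat \<Rightarrow> real^'d::finite" and m T :: nat and r \<eta> Y E0 :: real
  defines "q \<equiv> error_growth TYPE('d) m r \<eta> Y"
    and "\<delta> \<equiv> \<eta> * 2 * ((1 + error_growth TYPE('d) m r \<eta> Y)^T * E0) * (r * neuron_const TYPE('d) * Y^2)"
  assumes a: "\<forall>i<m. \<bar>fst (th i)\<bar> \<le> r" and r: "0 \<le> r" and \<eta>: "0 \<le> \<eta>"
    and samples: "\<forall>t<T. X (js t) \<in> Gamma"
    and init: "\<forall>x\<in>Gamma. \<bar>psi m th (W0 th) x - f x\<bar> \<le> E0"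
    and init_radius: "\<forall>i<m. norm (W0 th i) + \<bar>snd (snd (th i))\<bar> + R \<le> Y"
    and drift: "real T * \<delta> \<le> R"
  shows "t \<le> T \<Longrightarrow> \<forall>x\<in>Gamma. \<bar>psi m th (sgd m th f \<eta> X js t) x - f x\<bar> \<le> (1 + q)^t * E0"
proof -
  let ?W = "sgd m th f \<eta> X js"
  note \<delta>_def = \<delta>_def[folded q_def]
  have "\<bar>psi m th (W0 th) 0 - f 0\<bar> \<le> E0"
    using init by (simp add: mem_Gamma_iff)
  then have E0: "0 \<le> E0"
    by linarith
  have q: "0 \<le> q"
    unfolding q_def using \<eta> by (rule error_growth_nonneg)
  then have \<delta>: "0 \<le> \<delta>"
    unfolding \<delta>_def using E0 r \<eta> neuron_const_nonneg[where 'd='d] by simp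
  have drift_le: "real t * \<delta> \<le> R" if "t \<le> T" for t
    using that \<delta> drift by (meson of_nat_mono mult_right_mono order_trans)
  \<comment> \<open>the weights drift by at most \<open>\<delta>\<close> per step, which keeps them in the ball
    where the error bounds hold\<close>
  have "(\<forall>i<m. norm (?W t i - W0 th i) \<le> real t * \<delta>)
      \<and> (\<forall>x\<in>Gamma. \<bar>psi m th (?W t) x - f x\<bar> \<le> (1 + q)^t * E0)" if "t \<le> T" for t
    using that
  proof (induction t)
    case (Suc t)
    then have drift_t: "\<forall>i<m. norm (?W t i - W0 th i) \<le> real t * \<delta>"
      and err: "\<forall>x\<in>Gamma. \<bar>psi m th (?W t) x - f x\<bar> \<le> (1 + q)^t * E0"
      by auto
    have "(1 + q)^t * E0 \<le> (1 + q)^T * E0"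
      using Suc.prems q E0 by (intro mult_right_mono power_increasing) auto
    then have "\<bar>psi m th (?W t) (X (js t)) - f (X (js t))\<bar> \<le> (1 + q)^T * E0"
      using bspec[OF err, of "X (js t)"] samples Suc.prems by simp
    then have "\<forall>i<m. norm (?W (Suc t) i - ?W t i) \<le> \<delta>"
      unfolding \<delta>_def using radius_le_of_dist_le[OF drift_t drift_le init_radius] Suc.prems samples a \<eta>
      by (auto simp: mem_Gamma_iff intro!: norm_sgd_step_diff_le)
    then have drift_Suc: "\<forall>i<m. norm (?W (Suc t) i - W0 th i) \<le> real (Suc t) * \<delta>"
      using drift_t by (auto simp: algebra_simps intro: norm_diff_triangle_le)
    have "\<forall>x\<in>Gamma. \<bar>psi m th (sgd_step m th f \<eta> (?W t) (X (js t))) x - f x\<bar> \<le> (1 + q) * ((1 + q)^t * E0)"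
      unfolding q_def using radius_le_of_dist_le[OF drift_t drift_le init_radius]
        radius_le_of_dist_le[OF drift_Suc drift_le init_radius] Suc.prems samples err[unfolded q_def]
      by (intro sgd_step_error_le[OF a \<eta>]) auto
    with drift_Suc show ?case
      by (simp add: mult.assoc)
  qed (use init in simp)
  then show "t \<le> T \<Longrightarrow> ?thesis"
    by blast
qed

section \<open>The parameter box, the function class and the losses\<close>

definition Lambda_corner :: "real \<Rightarrow> real \<Rightarrow> nat \<Rightarrow> 'd::finite param" where
  "Lambda_corner al be m = (real m powr (-al), (\<chi> _. real m powr (-be)), real m powr (-be))"

lemma Lambda_eq_cbox: "Lambda al be m = cbox (- Lambda_corner al be m) (Lambda_corner al be m)"
  unfolding Lambda_def Lambda_corner_def uminus_Pair
  by (auto simp: cbox_Pair_eq mem_box_cart abs_le_iff minus_le_iff)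

lemma Lambda_sets: "Lambda al be m \<in> sets (borel :: 'd::finite param measure)"
  unfolding Lambda_eq_cbox by simp

lemma emeasure_Lambda_finite: "emeasure lborel (Lambda al be m :: 'd::finite param set) < \<infinity>"
  unfolding Lambda_eq_cbox by (rule emeasure_lborel_cbox_finite)

lemma emeasure_Lambda_pos:
  assumes "1 \<le> m"
  shows "0 < emeasure lborel (Lambda al be m :: 'd::finite param set)"
proof -
  have "0 < Lambda_corner al be m \<bullet> b" if "b \<in> (Basis :: 'd param set)" for b
    using assms that by (auto simp: Lambda_corner_def Basis_prod_def Basis_vec_def inner_axis)
  then show ?thesis
    unfolding Lambda_eq_cbox
    by (subst emeasure_lborel_cbox) (auto simp: less_imp_le inner_add_left intro!: prod_pos add_pos_pos)
qed

lemma measure_Lambda_pos: "1 \<le> m \<Longrightarrow> 0 < measure lborel (Lambda al be m :: 'd::finite param set)"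
  using emeasure_Lambda_pos emeasure_Lambda_finite by (auto simp: measure_def enn2real_positive_iff)

lemma Lambda_param_bounds:
  assumes "\<theta> \<in> (Lambda al be m :: 'd::finite param set)"
  shows "\<bar>fst \<theta>\<bar> \<le> real m powr (-al)" "\<bar>snd (snd \<theta>)\<bar> \<le> real m powr (-be)"
    "norm (fst (snd \<theta>)) + \<bar>snd (snd \<theta>)\<bar> \<le> (dim_d TYPE('d) + 1) * real m powr (-be)"
proof -
  show "\<bar>fst \<theta>\<bar> \<le> real m powr (-al)" "\<bar>snd (snd \<theta>)\<bar> \<le> real m powr (-be)"
    using assms unfolding Lambda_def by auto
  have "norm (fst (snd \<theta>)) \<le> (\<Sum>j\<in>UNIV. \<bar>fst (snd \<theta>) $ j\<bar>)"
    by (rule norm_le_l1_cart)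
  also have "\<dots> \<le> (\<Sum>j\<in>(UNIV::'d set). real m powr (-be))"
    using assms unfolding Lambda_def by (intro sum_mono) auto
  finally show "norm (fst (snd \<theta>)) + \<bar>snd (snd \<theta>)\<bar> \<le> (dim_d TYPE('d) + 1) * real m powr (-be)"
    using \<open>\<bar>snd (snd \<theta>)\<bar> \<le> real m powr (-be)\<close> unfolding dim_d_def by (simp add: algebra_simps)
qed

lemma F_cost_nonneg:
  assumes "F_admissible al be m f (A :: 'd::finite param \<Rightarrow> real^'d)"
  shows "0 \<le> F_cost al be m A"
proof -
  define \<theta>0 :: "'d param" where "\<theta>0 = (0, 0, 0)"
  have \<theta>0: "\<theta>0 \<in> Lambda al be m"
    unfolding Lambda_def \<theta>0_def by simp
  have "bdd_above ((\<lambda>\<theta>. norm (A \<theta>) / pdens al be m \<theta>) ` Lambda al be m)"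
    using assms unfolding F_admissible_def by simp
  from cSUP_upper[OF \<theta>0 this] have "norm (A \<theta>0) / pdens al be m \<theta>0 \<le> F_cost al be m A"
    unfolding F_cost_def .
  moreover have "0 \<le> norm (A \<theta>0) / pdens al be m \<theta>0"
    unfolding pdens_def by simp
  ultimately show ?thesis
    by linarith
qed

lemma norm_le_F_cost_pdens:
  assumes "1 \<le> m" "F_admissible al be m f A" "\<theta> \<in> Lambda al be m"
  shows "norm (A \<theta>) \<le> F_cost al be m A * pdens al be m \<theta>"
proof -
  have "norm (A \<theta>) / pdens al be m \<theta> \<le> F_cost al be m A"
    unfolding F_cost_def using assms(2,3) unfolding F_admissible_def by (intro cSUP_upper) auto
  moreover have "0 < pdens al be m \<theta>"
    unfolding pdens_def using measure_Lambda_pos[OF assms(1)] assms(3) by simp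
  ultimately show ?thesis
    by (simp add: divide_le_eq)
qed

lemma norm_zeta_le_on_Lambda:
  fixes x :: "real^'d::finite"
  assumes "\<theta> \<in> Lambda al be m" "x \<in> Gamma"
  shows "norm (zeta x \<theta>)
    \<le> real m powr (-al) * neuron_const TYPE('d) * ((dim_d TYPE('d) + 1) * real m powr (-be))^2"
proof -
  note bounds = Lambda_param_bounds[OF assms(1)]
  have "norm (zeta x (fst \<theta>, fst (snd \<theta>), snd (snd \<theta>)))
      \<le> \<bar>fst \<theta>\<bar> * neuron_const TYPE('d) * ((dim_d TYPE('d) + 1) * real m powr (-be))^2"
    using bounds(3) assms(2) by (intro norm_zeta_le) (auto simp: mem_Gamma_iff)
  also have "\<dots> \<le> real m powr (-al) * neuron_const TYPE('d) * ((dim_d TYPE('d) + 1) * real m powr (-be))^2"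
    using bounds(1) neuron_const_nonneg[where 'd='d] by (intro mult_right_mono) auto
  finally show ?thesis
    by simp
qed

lemma abs_le_F_cost:
  fixes x :: "real^'d::finite"
  assumes "1 \<le> m" and adm: "F_admissible al be m f A" and "x \<in> Gamma"
  shows "\<bar>f x\<bar> \<le> F_cost al be m A
    * (real m powr (-al) * neuron_const TYPE('d) * ((dim_d TYPE('d) + 1) * real m powr (-be))^2)"
    (is "_ \<le> ?F * ?Z")
proof -
  let ?L = "Lambda al be m :: 'd param set"
  define \<mu> where "\<mu> = measure lborel ?L"
  have \<mu>: "0 < \<mu>"
    unfolding \<mu>_def using assms(1) by (rule measure_Lambda_pos)
  have rep: "set_integrable lborel ?L (\<lambda>\<theta>. A \<theta> \<bullet> zeta x \<theta>)" "f x = (\<integral>\<theta>\<in>?L. A \<theta> \<bullet> zeta x \<theta> \<partial>lborel)"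
    using adm \<open>x \<in> Gamma\<close> unfolding F_admissible_def F_rep_def by auto
  have pointwise: "\<bar>A \<theta> \<bullet> zeta x \<theta>\<bar> \<le> ?F / \<mu> * ?Z" if "\<theta> \<in> ?L" for \<theta>
  proof -
    have "norm (A \<theta>) * norm (zeta x \<theta>) \<le> (?F * pdens al be m \<theta>) * ?Z"
      using norm_le_F_cost_pdens[OF assms(1) adm that] norm_zeta_le_on_Lambda[OF that \<open>x \<in> Gamma\<close>]
      by (intro mult_mono) (auto intro: order_trans[OF norm_ge_zero])
    then show ?thesis
      using that Cauchy_Schwarz_ineq2[of "A \<theta>" "zeta x \<theta>"] unfolding pdens_def \<mu>_def by simp
  qed
  have "\<bar>f x\<bar> \<le> (\<integral>\<theta>\<in>?L. norm (A \<theta> \<bullet> zeta x \<theta>) \<partial>lborel)"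
    unfolding rep(2) using set_integral_norm_bound[OF rep(1)] by simp
  also have "\<dots> \<le> (\<integral>\<theta>\<in>?L. ?F / \<mu> * ?Z \<partial>lborel)"
  proof (rule set_integral_mono)
    show "set_integrable lborel ?L (\<lambda>_. ?F / \<mu> * ?Z)"
      unfolding set_integrable_def using emeasure_Lambda_finite[of al be m, where 'd='d]
      by (intro integrable_scaleR_left integrable_real_indicator) (auto simp: less_top Lambda_sets)
  qed (use set_integrable_norm[OF rep(1)] pointwise in auto)
  also have "\<dots> = \<mu> * (?F / \<mu> * ?Z)"
    unfolding \<mu>_def using emeasure_Lambda_finite[of al be m, where 'd='d]
    by (subst set_integral_const) (auto simp: Lambda_sets)
  also have "\<dots> = ?F * ?Z"
    using \<mu> by simp
  finally show ?thesis .
qed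

lemma init_measure_support:
  assumes "1 \<le> m"
  shows "({..<m} \<rightarrow>\<^sub>E Lambda al be m) \<in> sets (init_measure al be m :: (nat \<Rightarrow> 'd::finite param) measure)"
    and "measure (init_measure al be m :: (nat \<Rightarrow> 'd param) measure) ({..<m} \<rightarrow>\<^sub>E Lambda al be m) = 1"
proof -
  let ?U = "uniform_measure lborel (Lambda al be m :: 'd param set)"
  have U: "prob_space ?U"
    using emeasure_Lambda_pos[OF assms, of al be, where 'd='d] emeasure_Lambda_finite[of al be m, where 'd='d]
    by (intro prob_space_uniform_measure) auto
  show "({..<m} \<rightarrow>\<^sub>E Lambda al be m) \<in> sets (init_measure al be m :: (nat \<Rightarrow> 'd param) measure)"
    unfolding init_measure_def by (intro sets_PiM_I_finite) (auto simp: sets_uniform_measure Lambda_sets)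
  interpret product_prob_space "\<lambda>_::nat. ?U"
    using U by (simp add: product_prob_space_def product_sigma_finite_def prob_space_imp_sigma_finite
      product_prob_space_axioms_def)
  have "emeasure (init_measure al be m :: (nat \<Rightarrow> 'd param) measure) ({..<m} \<rightarrow>\<^sub>E Lambda al be m)
      = (\<Prod>i<m. emeasure ?U (Lambda al be m))"
    unfolding init_measure_def by (rule emeasure_PiM) (auto simp: sets_uniform_measure Lambda_sets)
  also have "\<dots> = 1"
    using emeasure_Lambda_pos[OF assms, of al be, where 'd='d] emeasure_Lambda_finite[of al be m, where 'd='d]
    by (simp add: emeasure_uniform_measure_1)
  finally show "measure (init_measure al be m :: (nat \<Rightarrow> 'd param) measure) ({..<m} \<rightarrow>\<^sub>E Lambda al be m) = 1"
    by (simp add: measure_def)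
qed

lemma train_loss_le:
  assumes "1 \<le> N" "\<forall>n<N. (psi m th W (X n) - f (X n))^2 \<le> L"
  shows "train_loss m th f N X W \<le> L"
proof -
  have "(\<Sum>n<N. (psi m th W (X n) - f (X n))^2) \<le> (\<Sum>n<N. L)"
    using assms(2) by (intro sum_mono) auto
  then show ?thesis
    unfolding train_loss_def using assms(1) by (simp add: field_simps)
qed

lemma E_sgd_le:
  assumes "1 \<le> N" "0 \<le> L"
    and "\<forall>js\<in>{..<T} \<rightarrow>\<^sub>E {..<N}. \<forall>t<T. train_loss m th f N X (sgd m th f \<eta> X js t) \<le> L"
  shows "E_sgd m th f \<eta> N T X \<le> L"
proof -
  have "(1 / real T) * (\<Sum>t<T. train_loss m th f N X (sgd m th f \<eta> X js t)) \<le> L"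
    if "js \<in> {..<T} \<rightarrow>\<^sub>E {..<N}" for js
  proof (cases "T = 0")
    case False
    have "(\<Sum>t<T. train_loss m th f N X (sgd m th f \<eta> X js t)) \<le> (\<Sum>t<T. L)"
      using assms(3) that by (intro sum_mono) auto
    then show ?thesis
      using False by (simp add: field_simps)
  qed (use assms(2) in simp)
  then have "(\<Sum>js\<in>{..<T} \<rightarrow>\<^sub>E {..<N}. (1 / real T) * (\<Sum>t<T. train_loss m th f N X (sgd m th f \<eta> X js t)))
      \<le> (\<Sum>js\<in>{..<T} \<rightarrow>\<^sub>E {..<N}. L)"
    by (intro sum_mono) auto
  also have "\<dots> = real N ^ T * L"
    by (simp add: card_funcsetE)
  finally show ?thesis
    unfolding E_sgd_def using assms(1) by (simp add: field_simps)
qed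

lemma E_X_sgd_le:
  assumes D: "prob_space D" "AE x in D. x \<in> Gamma" and "0 \<le> L"
    and "\<forall>X. (\<forall>n<N. X n \<in> Gamma) \<longrightarrow> E_sgd m th f \<eta> N T X \<le> L"
  shows "E_X_sgd m th f \<eta> N T D \<le> L"
proof -
  let ?P = "PiM {..<N} (\<lambda>_. D)"
  have P: "prob_space ?P"
    by (rule prob_space_PiM) (use D in simp)
  have "AE X in ?P. \<forall>n\<in>{..<N}. X n \<in> Gamma"
    by (intro AE_finite_allI) (auto intro!: AE_PiM_component D)
  then have ae: "AE X in ?P. E_sgd m th f \<eta> N T X \<le> L"
    using assms(4) by (auto elim!: eventually_mono)
  show ?thesis
  proof (cases "integrable ?P (\<lambda>X. E_sgd m th f \<eta> N T X)")
    case True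
    then show ?thesis
      unfolding E_X_sgd_def by (rule prob_space.integral_le_const[OF P _ ae])
  next
    case False
    then show ?thesis
      unfolding E_X_sgd_def using assms(3) by (simp add: not_integrable_integral_eq)
  qed
qed

section \<open>Consequences of the width and horizon conditions\<close>

lemma le_sqrt_self:
  fixes x :: real
  assumes "0 \<le> x" "x \<le> 1"
  shows "x \<le> sqrt x"
  using assms by (intro real_le_rsqrt) (simp add: power2_eq_square mult_left_le)

lemma mult_powr_neg_le_of_root_le:
  fixes M e x \<epsilon> :: real
  assumes "0 < M" "0 < e" "0 \<le> x" "0 < \<epsilon>" "(x / \<epsilon>) powr (1 / e) \<le> M"
  shows "x * M powr (-e) \<le> \<epsilon>"
proof -
  have "x / \<epsilon> = ((x / \<epsilon>) powr (1 / e)) powr e"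
    using assms(2-4) by (simp add: powr_powr)
  also have "\<dots> \<le> M powr e"
    using assms by (intro powr_mono2) auto
  finally show ?thesis
    using assms(1,4) by (simp add: powr_minus divide_simps mult.commute)
qed

lemma small_init_if_M_bound_le:
  fixes M al be nf \<epsilon> d :: real
  assumes "1 \<le> d" "0 \<le> al" "0 \<le> be" "1 < al + 3*be" "0 < M" "0 \<le> nf" "0 < \<epsilon>"
    and "M_bound d al be nf \<epsilon> \<delta> \<le> M"
  shows "M * M powr (-al) * (M powr (-be))^3 \<le> \<epsilon>"
    and "nf * M powr (-al) * (M powr (-be))^2 \<le> sqrt \<epsilon>"
proof -
  have "1 \<le> C_d' d"
    unfolding C_d'_def using assms(1) powr_ge_zero[of d "5/2"] powr_ge_zero[of d "3/2"]
      powr_ge_zero[of d "1/2"] zero_le_power2[of d] by linarith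
  have "M * M powr (-al) * (M powr (-be))^3 = M powr 1 * M powr (-al) * M powr (3 * -be)"
    using assms(5) by (simp add: powr_power)
  also have "\<dots> = M powr (-(al + 3*be - 1))"
    by (simp only: powr_add[symmetric]) (simp add: algebra_simps)
  also have "\<dots> \<le> C_d' d * M powr (-(al + 3*be - 1))"
    using \<open>1 \<le> C_d' d\<close> by (simp add: mult_le_cancel_right1)
  also have "\<dots> \<le> \<epsilon>"
    by (rule mult_powr_neg_le_of_root_le) (use assms \<open>1 \<le> C_d' d\<close> in \<open>auto simp: M_bound_def\<close>)
  finally show "M * M powr (-al) * (M powr (-be))^3 \<le> \<epsilon>" .
  have "(nf * M powr (-al) * (M powr (-be))^2)^2 = nf^2 * ((M powr (-al))^2 * (M powr (-be))^4)"
    by (simp add: power_mult_distrib flip: power_mult)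
  also have "\<dots> = nf^2 * (M powr (2 * -al) * M powr (4 * -be))"
    using assms(5) by (simp add: powr_power)
  also have "\<dots> = nf^2 * M powr (-(2*al + 4*be))"
    by (simp add: powr_add[symmetric] algebra_simps)
  also have "\<dots> \<le> \<epsilon>"
    by (rule mult_powr_neg_le_of_root_le) (use assms in \<open>auto simp: M_bound_def\<close>)
  finally show "nf * M powr (-al) * (M powr (-be))^2 \<le> sqrt \<epsilon>"
    by (rule real_le_rsqrt)
qed

lemma T0_bound_le:
  fixes M al be nf \<epsilon> :: real
  assumes "0 \<le> nf"
  shows "max nf 1 * T0_bound M al be nf \<epsilon> \<le> M powr (2*al + 2*be) / \<epsilon> powr (1/2)"
    and "T0_bound M al be nf \<epsilon> \<le> M powr ((2 + 4*al) / 3) / \<epsilon> powr (2/3)"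
proof -
  define Cf where "Cf = 1 / ((nf + 1)^2 * max nf 1)"
  have "1 \<le> (nf + 1)^2"
    using assms by (simp add: one_le_power)
  moreover have "max nf 1 * Cf = 1 / (nf + 1)^2"
    unfolding Cf_def by simp
  ultimately have Cf: "0 \<le> Cf" "max nf 1 * Cf \<le> 1"
    unfolding Cf_def by (auto simp: divide_le_eq_1)
  moreover have "1 * Cf \<le> max nf 1 * Cf"
    using Cf(1) by (intro mult_right_mono) auto
  ultimately have "Cf \<le> 1"
    by linarith
  have "max nf 1 * T0_bound M al be nf \<epsilon> \<le> max nf 1 * (Cf * (M powr (2*al + 2*be) / \<epsilon> powr (1/2)))"
    unfolding T0_bound_def Cf_def by (intro mult_left_mono Min_le) auto
  also have "\<dots> \<le> M powr (2*al + 2*be) / \<epsilon> powr (1/2)"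
    using Cf unfolding mult.assoc[symmetric] by (intro mult_left_le_one_le) auto
  finally show "max nf 1 * T0_bound M al be nf \<epsilon> \<le> M powr (2*al + 2*be) / \<epsilon> powr (1/2)" .
  have "T0_bound M al be nf \<epsilon> \<le> Cf * (M powr ((2 + 4*al) / 3) / \<epsilon> powr (2/3))"
    unfolding T0_bound_def Cf_def by (intro mult_left_mono Min_le) auto
  also have "\<dots> \<le> M powr ((2 + 4*al) / 3) / \<epsilon> powr (2/3)"
    using Cf(1) \<open>Cf \<le> 1\<close> by (intro mult_left_le_one_le) auto
  finally show "T0_bound M al be nf \<epsilon> \<le> M powr ((2 + 4*al) / 3) / \<epsilon> powr (2/3)" .
qed

lemma horizon_le_of_T0_bound:
  fixes M al be nf \<epsilon> T :: real
  assumes "1 \<le> M" "0 \<le> nf" "0 < \<epsilon>" "\<epsilon> \<le> 1" "0 \<le> T" "T \<le> T0_bound M al be nf \<epsilon>"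
  shows "T * \<epsilon> * (M powr (-al) * M powr (-be))^2 * max nf 1 \<le> 1"
proof -
  have "max nf 1 * T * sqrt \<epsilon> \<le> max nf 1 * T0_bound M al be nf \<epsilon> * sqrt \<epsilon>"
    using assms(3,6) by (intro mult_right_mono mult_left_mono) auto
  also have "\<dots> \<le> M powr (2*al + 2*be)"
    using T0_bound_le(1)[OF assms(2), of M al be \<epsilon>] assms(3) by (simp add: powr_half_sqrt field_simps)
  finally have T: "max nf 1 * T * sqrt \<epsilon> \<le> M powr (2*al + 2*be)" .
  have "(M powr (-al) * M powr (-be))^2 = M powr (-(2*al + 2*be))"
    using assms(1) by (simp add: powr_power power_mult_distrib powr_add[symmetric] algebra_simps)
  then have "T * \<epsilon> * (M powr (-al) * M powr (-be))^2 * max nf 1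
      = (max nf 1 * T * \<epsilon>) * M powr (-(2*al + 2*be))"
    by simp
  also have "\<dots> \<le> M powr (2*al + 2*be) * M powr (-(2*al + 2*be))"
    using T mult_left_mono[OF le_sqrt_self, of \<epsilon> "max nf 1 * T"] assms(3-5)
    by (intro mult_right_mono) auto
  also have "\<dots> = 1"
    using assms(1) by (simp add: powr_add[symmetric])
  finally show ?thesis .
qed

lemma weighted_horizon_le_of_T0_bound:
  fixes M al be nf \<epsilon> T :: real
  assumes "1 \<le> M" "0 \<le> al" "0 \<le> nf" "0 < \<epsilon>" "\<epsilon> \<le> 1" "0 \<le> T" "T \<le> T0_bound M al be nf \<epsilon>"
  shows "T * \<epsilon> * (M powr (-al))^2 \<le> M"
proof -
  have "\<epsilon> \<le> \<epsilon> powr (2/3)"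
    using powr_mono'[of "2/3" 1 \<epsilon>] assms(4,5) by simp
  then have "T * \<epsilon> \<le> T0_bound M al be nf \<epsilon> * \<epsilon> powr (2/3)"
    using assms(4,6,7) by (intro mult_mono) auto
  also have "\<dots> \<le> M powr ((2 + 4*al) / 3)"
    using T0_bound_le(2)[OF assms(3), of M al be \<epsilon>] assms(4) by (simp add: field_simps)
  finally have "T * \<epsilon> * (M powr (-al))^2 \<le> M powr ((2 + 4*al) / 3) * M powr (-2*al)"
    using assms(1) by (simp add: powr_power mult_right_mono)
  also have "\<dots> = M powr ((2 - 2*al) / 3)"
    by (simp add: powr_add[symmetric] field_simps)
  also have "\<dots> \<le> M powr 1"
    using assms(1,2) by (intro powr_mono) auto
  finally show ?thesis
    using assms(1) by simp
qed

section \<open>The lazy and the bounded regime\<close>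

definition lazy_exponent :: "'d::finite itself \<Rightarrow> real \<Rightarrow> real" where
  "lazy_exponent t c2 = 2 * c2 * (neuron_const t)^2 * (dim_d t + 2)^4"

definition lazy_threshold :: "'d::finite itself \<Rightarrow> real \<Rightarrow> real" where
  "lazy_threshold t c2
    = 4 * c2 * exp (lazy_exponent t c2) * (neuron_const t)^2 * (dim_d t + 2)^2 * (dim_d t + 1)^3"

definition bounded_exponent :: "'d::finite itself \<Rightarrow> real \<Rightarrow> real \<Rightarrow> real" where
  "bounded_exponent t c2 K = 2 * c2 * (neuron_const t)^2 * (K + 1)^4 * lazy_threshold t c2"

definition loss_const :: "'d::finite itself \<Rightarrow> real \<Rightarrow> real \<Rightarrow> real" where
  "loss_const t c2 K
    = (2 * neuron_const t * (dim_d t + 1)^3)^2 * exp (2 * (lazy_exponent t c2 + bounded_exponent t c2 K))"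

lemma lazy_exponent_nonneg: "0 \<le> c2 \<Longrightarrow> 0 \<le> lazy_exponent TYPE('d::finite) c2"
  unfolding lazy_exponent_def by simp

lemma lazy_threshold_pos: "0 < c2 \<Longrightarrow> 0 < lazy_threshold TYPE('d::finite) c2"
  unfolding lazy_threshold_def using dim_d_ge_1[where 'd='d] neuron_const_pos[where 'd='d]
  by (intro mult_pos_pos) auto

lemma bounded_exponent_nonneg: "0 < c2 \<Longrightarrow> 0 \<le> bounded_exponent TYPE('d::finite) c2 K"
  unfolding bounded_exponent_def using lazy_threshold_pos[of c2, where 'd='d] by simp

(* r and s stand for the scales m^-al and m^-be of the output weights and of the inner
   parameters; the assumptions are what the width and horizon conditions of the theorem give. *)
locale pinn_sgd_run =
  fixes m :: nat and th :: "nat \<Rightarrow> 'd::finite param" and f :: "real^'d \<Rightarrow> real"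
    and \<eta> :: real and X :: "nat \<Rightarrow> real^'d" and js :: "nat \<Rightarrow> nat" and T :: nat
    and r s \<epsilon> nf c2 K :: real
  assumes m_ge_1: "1 \<le> m"
    and r: "0 < r" "r \<le> 1" and s: "0 < s" "s \<le> 1" and \<epsilon>: "0 < \<epsilon>" "\<epsilon> \<le> 1"
    and \<eta>: "0 \<le> \<eta>" "\<eta> * real m \<le> c2 * \<epsilon>" and c2: "0 < c2" and nf: "0 \<le> nf"
    and a_le: "\<forall>i<m. \<bar>fst (th i)\<bar> \<le> r" and b_le: "\<forall>i<m. \<bar>snd (snd (th i))\<bar> \<le> s"
    and init_radius: "\<forall>i<m. norm (W0 th i) + \<bar>snd (snd (th i))\<bar> \<le> (dim_d TYPE('d) + 1) * s"
    and target_le: "\<forall>x\<in>Gamma. \<bar>f x\<bar> \<le> nf * (r * neuron_const TYPE('d) * ((dim_d TYPE('d) + 1) * s)^2)"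
    and init_output_small: "real m * r * s^3 \<le> \<epsilon>"
    and target_small: "nf * r * s^2 \<le> sqrt \<epsilon>"
    and horizon: "real T * \<epsilon> * (r * s)^2 * max nf 1 \<le> 1"
    and weighted_horizon: "real T * \<epsilon> * r^2 \<le> real m"
    and samples: "\<forall>t<T. X (js t) \<in> Gamma"
    and weights_bounded: "\<forall>t\<le>T. \<forall>i<m. norm (sgd m th f \<eta> X js t i) \<le> K"
begin

definition init_error :: real where
  "init_error = neuron_const TYPE('d) * (dim_d TYPE('d) + 1)^3 * r * s^2 * (real m * s + nf)"

lemma init_error_nonneg: "0 \<le> init_error"
  unfolding init_error_def using neuron_const_nonneg[where 'd='d] dim_d_ge_1[where 'd='d] r s nf by simp

lemma initial_residual_le: "\<forall>x\<in>Gamma. \<bar>psi m th (W0 th) x - f x\<bar> \<le> init_error"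
proof
  fix x :: "real^'d" assume x: "x \<in> Gamma"
  define c d where "c = neuron_const TYPE('d)" and "d = dim_d TYPE('d)"
  have c: "0 \<le> c" and d: "1 \<le> d"
    unfolding c_def d_def by (rule neuron_const_nonneg dim_d_ge_1)+
  have "\<bar>psi m th (W0 th) x\<bar> \<le> (\<Sum>i<m. \<bar>neuron (fst (th i)) (snd (snd (th i))) (W0 th i) x\<bar>)"
    unfolding psi_eq_sum_neuron by (rule sum_abs)
  also have "\<dots> \<le> (\<Sum>i<m. r * c * ((d + 1) * s)^3)"
  proof (rule sum_mono)
    fix i assume "i \<in> {..<m}"
    then have "\<bar>neuron (fst (th i)) (snd (snd (th i))) (W0 th i) x\<bar> \<le> \<bar>fst (th i)\<bar> * c * ((d + 1) * s)^3"
      unfolding c_def d_def using init_radius x by (intro abs_neuron_le) (auto simp: mem_Gamma_iff)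
    also have "\<dots> \<le> r * c * ((d + 1) * s)^3"
      using a_le \<open>i \<in> {..<m}\<close> c d s by (intro mult_right_mono) auto
    finally show "\<bar>neuron (fst (th i)) (snd (snd (th i))) (W0 th i) x\<bar> \<le> r * c * ((d + 1) * s)^3" .
  qed
  also have "\<dots> = c * (d + 1)^3 * r * s^2 * (real m * s)"
    by (simp add: power_mult_distrib power2_eq_square power3_eq_cube)
  finally have psi: "\<bar>psi m th (W0 th) x\<bar> \<le> c * (d + 1)^3 * r * s^2 * (real m * s)" .
  have "\<bar>f x\<bar> \<le> (c * (d + 1)^2 * r * s^2) * nf"
    using target_le x unfolding c_def d_def by (simp add: power_mult_distrib mult_ac)
  also have "\<dots> \<le> (c * (d + 1)^3 * r * s^2) * nf"
    using c d r nf by (intro mult_right_mono mult_left_mono power_increasing) auto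
  moreover have "init_error = c * (d + 1)^3 * r * s^2 * (real m * s) + (c * (d + 1)^3 * r * s^2) * nf"
    unfolding init_error_def c_def d_def by (simp add: algebra_simps)
  ultimately show "\<bar>psi m th (W0 th) x - f x\<bar> \<le> init_error"
    using psi abs_triangle_ineq4[of "psi m th (W0 th) x" "f x"] by linarith
qed

lemma init_error_le_sqrt: "init_error \<le> 2 * neuron_const TYPE('d) * (dim_d TYPE('d) + 1)^3 * sqrt \<epsilon>"
proof -
  have "real m * r * s^3 + nf * r * s^2 \<le> 2 * sqrt \<epsilon>"
    using init_output_small target_small le_sqrt_self[OF less_imp_le \<epsilon>(2)] \<epsilon> by linarith
  then have "neuron_const TYPE('d) * (dim_d TYPE('d) + 1)^3 * (real m * r * s^3 + nf * r * s^2)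
      \<le> neuron_const TYPE('d) * (dim_d TYPE('d) + 1)^3 * (2 * sqrt \<epsilon>)"
    using neuron_const_nonneg[where 'd='d] dim_d_ge_1[where 'd='d] by (intro mult_left_mono) auto
  then show ?thesis
    unfolding init_error_def by (simp add: algebra_simps power2_eq_square power3_eq_cube)
qed

lemma growth_times_horizon_le:
  "error_growth TYPE('d) m r \<eta> Y * real T \<le> 2 * c2 * (neuron_const TYPE('d))^2 * Y^4 * (real T * \<epsilon> * r^2)"
proof -
  have "error_growth TYPE('d) m r \<eta> Y * real T = (\<eta> * real m) * (2 * (neuron_const TYPE('d))^2 * Y^4 * real T * r^2)"
    unfolding error_growth_def by (simp add: power2_eq_square power4_eq_xxxx algebra_simps)
  also have "\<dots> \<le> (c2 * \<epsilon>) * (2 * (neuron_const TYPE('d))^2 * Y^4 * real T * r^2)"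
    using \<eta> by (intro mult_right_mono) auto
  finally show ?thesis
    by (simp add: algebra_simps)
qed

lemma scaled_horizon: "real T * \<epsilon> * (r * s)^2 \<le> 1" "nf * (real T * \<epsilon> * (r * s)^2) \<le> 1"
proof -
  have "0 \<le> real T * \<epsilon> * (r * s)^2"
    using \<epsilon> by simp
  then have "real T * \<epsilon> * (r * s)^2 * 1 \<le> real T * \<epsilon> * (r * s)^2 * max nf 1"
    "real T * \<epsilon> * (r * s)^2 * nf \<le> real T * \<epsilon> * (r * s)^2 * max nf 1"
    by (intro mult_left_mono; simp)+
  then show "real T * \<epsilon> * (r * s)^2 \<le> 1" "nf * (real T * \<epsilon> * (r * s)^2) \<le> 1"
    using horizon by (simp_all add: mult.commute)
qed

lemma step_size_times_init_error_le:
  "\<eta> * real T * r * init_error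
    \<le> c2 * neuron_const TYPE('d) * (dim_d TYPE('d) + 1)^3 * (s + 1 / real m)"
proof -
  define H where "H = real T * \<epsilon> * (r * s)^2"
  have H: "H \<le> 1" "nf * H \<le> 1" "0 \<le> H"
    using scaled_horizon \<epsilon> unfolding H_def by auto
  have m: "0 < real m"
    using m_ge_1 by simp
  have "(\<eta> * real m) * (real T * r^2 * s^2 * s) \<le> (c2 * \<epsilon>) * (real T * r^2 * s^2 * s)"
    using \<eta> s by (intro mult_right_mono) auto
  also have "\<dots> = c2 * s * H"
    unfolding H_def by (simp add: power_mult_distrib)
  also have "\<dots> \<le> c2 * s"
    using H c2 s by (simp add: mult_left_le)
  finally have first: "\<eta> * (real T * r^2 * s^2) * (real m * s) \<le> c2 * s"
    by (simp add: algebra_simps)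
  have "(\<eta> * real m) * (real T * r^2 * s^2 * nf) \<le> (c2 * \<epsilon>) * (real T * r^2 * s^2 * nf)"
    using \<eta> nf by (intro mult_right_mono) auto
  also have "\<dots> = c2 * (nf * H)"
    unfolding H_def by (simp add: power_mult_distrib)
  also have "\<dots> \<le> c2"
    using H c2 by (simp add: mult_left_le)
  finally have second: "\<eta> * (real T * r^2 * s^2) * nf \<le> c2 / real m"
    using m by (simp add: field_simps)
  have "\<eta> * real T * r * init_error
      = neuron_const TYPE('d) * (dim_d TYPE('d) + 1)^3
        * (\<eta> * (real T * r^2 * s^2) * (real m * s) + \<eta> * (real T * r^2 * s^2) * nf)"
    unfolding init_error_def by (simp add: power2_eq_square algebra_simps)
  also have "\<dots> \<le> neuron_const TYPE('d) * (dim_d TYPE('d) + 1)^3 * (c2 * s + c2 / real m)"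
    using first second neuron_const_nonneg[where 'd='d] dim_d_ge_1[where 'd='d]
    by (intro mult_left_mono add_mono) auto
  finally show ?thesis
    by (simp add: algebra_simps add_divide_distrib)
qed

lemma lazy_growth_le:
  "error_growth TYPE('d) m r \<eta> ((dim_d TYPE('d) + 2) * s) * real T \<le> lazy_exponent TYPE('d) c2"
proof -
  let ?a = "2 * c2 * (neuron_const TYPE('d))^2 * (dim_d TYPE('d) + 2)^4"
  have "error_growth TYPE('d) m r \<eta> ((dim_d TYPE('d) + 2) * s) * real T
      \<le> 2 * c2 * (neuron_const TYPE('d))^2 * ((dim_d TYPE('d) + 2) * s)^4 * (real T * \<epsilon> * r^2)"
    by (rule growth_times_horizon_le)
  also have "\<dots> = ?a * (real T * \<epsilon> * (r * s)^2 * s^2)"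
    by (simp add: power_mult_distrib power2_eq_square power4_eq_xxxx algebra_simps)
  also have "\<dots> \<le> ?a * (1 * 1)"
    using scaled_horizon(1) s c2 \<epsilon> by (intro mult_left_mono mult_mono) (auto simp: power_le_one)
  finally show ?thesis
    unfolding lazy_exponent_def by simp
qed

lemma lazy_drift_le:
  defines "Y \<equiv> (dim_d TYPE('d) + 2) * s"
  assumes "lazy_threshold TYPE('d) c2 * s^2 \<le> 1" "lazy_threshold TYPE('d) c2 \<le> real m"
  shows "real T * (\<eta> * 2 * ((1 + error_growth TYPE('d) m r \<eta> Y)^T * init_error) * (r * neuron_const TYPE('d) * Y^2)) \<le> s"
proof -
  define c d \<Lambda> where "c = neuron_const TYPE('d)" and "d = dim_d TYPE('d)" and "\<Lambda> = lazy_threshold TYPE('d) c2"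
  have c: "0 \<le> c" and d: "1 \<le> d"
    unfolding c_def d_def by (rule neuron_const_nonneg dim_d_ge_1)+
  have "(1 + error_growth TYPE('d) m r \<eta> Y)^T \<le> exp (lazy_exponent TYPE('d) c2)"
    unfolding Y_def using \<eta> lazy_growth_le by (intro one_plus_power_le_exp error_growth_nonneg) auto
  have Y2: "Y^2 = (d + 2)^2 * s^2"
    unfolding Y_def d_def by (simp add: power_mult_distrib)
  have "real T * (\<eta> * 2 * ((1 + error_growth TYPE('d) m r \<eta> Y)^T * init_error) * (r * c * Y^2))
      = (2 * (1 + error_growth TYPE('d) m r \<eta> Y)^T * c * (d + 2)^2 * s^2) * (\<eta> * real T * r * init_error)"
    unfolding Y2 by (simp add: algebra_simps)
  also have "\<dots> \<le> (2 * exp (lazy_exponent TYPE('d) c2) * c * (d + 2)^2 * s^2) * (c2 * c * (d + 1)^3 * (s + 1 / real m))"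
  proof (rule mult_mono)
    show "2 * (1 + error_growth TYPE('d) m r \<eta> Y)^T * c * (d + 2)^2 * s^2
        \<le> 2 * exp (lazy_exponent TYPE('d) c2) * c * (d + 2)^2 * s^2"
      using \<open>(1 + _)^T \<le> _\<close> c by (intro mult_right_mono mult_left_mono) auto
    show "\<eta> * real T * r * init_error \<le> c2 * c * (d + 1)^3 * (s + 1 / real m)"
      unfolding c_def d_def by (rule step_size_times_init_error_le)
  qed (use c \<eta> r init_error_nonneg in auto)
  also have "\<dots> = \<Lambda> / 2 * (s^2 * (s + 1 / real m))"
    unfolding \<Lambda>_def lazy_threshold_def c_def d_def by (simp add: power2_eq_square mult_ac)
  also have "\<dots> = (\<Lambda> * s^2) * s / 2 + (\<Lambda> / real m) * s^2 / 2"
    using m_ge_1 by (simp add: field_simps)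
  also have "\<dots> \<le> 1 * s / 2 + 1 * s / 2"
  proof (intro add_mono divide_right_mono mult_mono)
    show "\<Lambda> / real m \<le> 1" "s^2 \<le> s"
      using assms(3) m_ge_1 s unfolding \<Lambda>_def by (auto simp: power2_eq_square mult_le_one)
  qed (use assms(2) s lazy_threshold_pos[OF c2, where 'd='d] in \<open>auto simp: \<Lambda>_def\<close>)
  finally show ?thesis
    unfolding c_def by simp
qed

lemma error_le_lazy:
  assumes "lazy_threshold TYPE('d) c2 * s^2 \<le> 1" "lazy_threshold TYPE('d) c2 \<le> real m"
    and "t \<le> T" "x \<in> Gamma"
  shows "\<bar>psi m th (sgd m th f \<eta> X js t) x - f x\<bar> \<le> exp (lazy_exponent TYPE('d) c2) * init_error"
proof -
  define Y where "Y = (dim_d TYPE('d) + 2) * s"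
  have "\<forall>i<m. norm (W0 th i) + \<bar>snd (snd (th i))\<bar> + s \<le> Y"
    using init_radius unfolding Y_def by (auto simp: algebra_simps)
  moreover have "real T * (\<eta> * 2 * ((1 + error_growth TYPE('d) m r \<eta> Y)^T * init_error)
      * (r * neuron_const TYPE('d) * Y^2)) \<le> s"
    unfolding Y_def using assms(1,2) by (rule lazy_drift_le)
  ultimately have "\<forall>x\<in>Gamma. \<bar>psi m th (sgd m th f \<eta> X js t) x - f x\<bar>
      \<le> (1 + error_growth TYPE('d) m r \<eta> Y)^t * init_error"
    using a_le r \<eta> samples initial_residual_le assms(3) by (intro sgd_error_le_near_init[where R = s]) auto
  then have "\<bar>psi m th (sgd m th f \<eta> X js t) x - f x\<bar> \<le> (1 + error_growth TYPE('d) m r \<eta> Y)^t * init_error"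
    using assms(4) by blast
  also have "\<dots> \<le> exp (lazy_exponent TYPE('d) c2) * init_error"
    using \<eta> assms(3) lazy_growth_le init_error_nonneg unfolding Y_def
    by (intro mult_right_mono one_plus_power_le_exp error_growth_nonneg) auto
  finally show ?thesis .
qed

lemma bounded_regime_horizon_le:
  assumes "\<not> (lazy_threshold TYPE('d) c2 * s^2 \<le> 1 \<and> lazy_threshold TYPE('d) c2 \<le> real m)"
  shows "real T * \<epsilon> * r^2 \<le> lazy_threshold TYPE('d) c2"
proof (cases "lazy_threshold TYPE('d) c2 \<le> real m")
  case True
  then have "1 < lazy_threshold TYPE('d) c2 * s^2"
    using assms by auto
  moreover have "0 \<le> real T * \<epsilon> * r^2"
    using \<epsilon> by simp
  ultimately have "real T * \<epsilon> * r^2 \<le> real T * \<epsilon> * r^2 * (lazy_threshold TYPE('d) c2 * s^2)"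
    by (simp add: mult_le_cancel_left1)
  also have "\<dots> = lazy_threshold TYPE('d) c2 * (real T * \<epsilon> * (r * s)^2)"
    by (simp add: power_mult_distrib)
  also have "\<dots> \<le> lazy_threshold TYPE('d) c2"
    using scaled_horizon(1) lazy_threshold_pos[OF c2, where 'd='d] by (simp add: mult_le_cancel_left1)
  finally show ?thesis .
next
  case False
  then show ?thesis
    using weighted_horizon by linarith
qed

lemma error_le_bounded:
  assumes "\<not> (lazy_threshold TYPE('d) c2 * s^2 \<le> 1 \<and> lazy_threshold TYPE('d) c2 \<le> real m)"
    and "t \<le> T" "x \<in> Gamma"
  shows "\<bar>psi m th (sgd m th f \<eta> X js t) x - f x\<bar> \<le> exp (bounded_exponent TYPE('d) c2 K) * init_error"
proof -
  have "\<forall>t\<le>T. \<forall>i<m. norm (sgd m th f \<eta> X js t i) + \<bar>snd (snd (th i))\<bar> \<le> K + 1"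
    using weights_bounded b_le s by (smt (verit))
  then have "\<forall>x\<in>Gamma. \<bar>psi m th (sgd m th f \<eta> X js t) x - f x\<bar>
      \<le> (1 + error_growth TYPE('d) m r \<eta> (K + 1))^t * init_error"
    using a_le \<eta> samples initial_residual_le assms(2) by (intro sgd_error_le_of_bounded_weights) auto
  then have "\<bar>psi m th (sgd m th f \<eta> X js t) x - f x\<bar> \<le> (1 + error_growth TYPE('d) m r \<eta> (K + 1))^t * init_error"
    using assms(3) by blast
  also have "\<dots> \<le> exp (bounded_exponent TYPE('d) c2 K) * init_error"
  proof (intro mult_right_mono one_plus_power_le_exp error_growth_nonneg)
    have "error_growth TYPE('d) m r \<eta> (K + 1) * real T
        \<le> 2 * c2 * (neuron_const TYPE('d))^2 * (K + 1)^4 * (real T * \<epsilon> * r^2)"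
      by (rule growth_times_horizon_le)
    also have "\<dots> \<le> bounded_exponent TYPE('d) c2 K"
      unfolding bounded_exponent_def using bounded_regime_horizon_le[OF assms(1)] c2
      by (intro mult_left_mono) auto
    finally show "error_growth TYPE('d) m r \<eta> (K + 1) * real T \<le> bounded_exponent TYPE('d) c2 K" .
  qed (use \<eta> assms(2) init_error_nonneg in auto)
  finally show ?thesis .
qed

theorem error_le:
  assumes "t \<le> T" "x \<in> Gamma"
  shows "\<bar>psi m th (sgd m th f \<eta> X js t) x - f x\<bar>
    \<le> 2 * neuron_const TYPE('d) * (dim_d TYPE('d) + 1)^3 * sqrt \<epsilon>
      * exp (lazy_exponent TYPE('d) c2 + bounded_exponent TYPE('d) c2 K)"
proof -
  let ?G = "lazy_exponent TYPE('d) c2 + bounded_exponent TYPE('d) c2 K"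
  have "\<bar>psi m th (sgd m th f \<eta> X js t) x - f x\<bar> \<le> exp ?G * init_error"
  proof (cases "lazy_threshold TYPE('d) c2 * s^2 \<le> 1 \<and> lazy_threshold TYPE('d) c2 \<le> real m")
    case True
    have "\<bar>psi m th (sgd m th f \<eta> X js t) x - f x\<bar> \<le> exp (lazy_exponent TYPE('d) c2) * init_error"
      using error_le_lazy[OF conjunct1[OF True] conjunct2[OF True] assms] .
    also have "\<dots> \<le> exp ?G * init_error"
      by (rule mult_right_mono[OF _ init_error_nonneg]) (use bounded_exponent_nonneg[OF c2, where 'd='d] in simp)
    finally show ?thesis .
  next
    case False
    have "\<bar>psi m th (sgd m th f \<eta> X js t) x - f x\<bar> \<le> exp (bounded_exponent TYPE('d) c2 K) * init_error"
      using error_le_bounded[OF False assms] .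
    also have "\<dots> \<le> exp ?G * init_error"
      by (rule mult_right_mono[OF _ init_error_nonneg]) (use lazy_exponent_nonneg[of c2, where 'd='d] c2 in simp)
    finally show ?thesis .
  qed
  also have "\<dots> \<le> exp ?G * (2 * neuron_const TYPE('d) * (dim_d TYPE('d) + 1)^3 * sqrt \<epsilon>)"
    using init_error_le_sqrt by (intro mult_left_mono) auto
  finally show ?thesis
    by (simp add: mult_ac)
qed

corollary squared_error_le:
  assumes "t \<le> T" "x \<in> Gamma"
  shows "(psi m th (sgd m th f \<eta> X js t) x - f x)^2 \<le> loss_const TYPE('d) c2 K * \<epsilon>"
proof -
  have "\<bar>psi m th (sgd m th f \<eta> X js t) x - f x\<bar>^2
      \<le> (2 * neuron_const TYPE('d) * (dim_d TYPE('d) + 1)^3 * sqrt \<epsilon>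
        * exp (lazy_exponent TYPE('d) c2 + bounded_exponent TYPE('d) c2 K))^2"
    using error_le[OF assms] by (intro power_mono) auto
  also have "\<dots> = loss_const TYPE('d) c2 K * \<epsilon>"
    unfolding loss_const_def using \<epsilon>(1) by (simp add: power_mult_distrib exp_double[symmetric] mult_ac)
  finally show ?thesis
    by simp
qed

end

section \<open>Expected training loss\<close>

lemma pinn_sgd_run_of_scalings:
  fixes f :: "real^'d::finite \<Rightarrow> real"
  assumes "0 \<le> al" "0 \<le> be" "1 < al + 3 * be" "1 \<le> m" "0 < c2"
    and adm: "F_admissible al be m f A" "F_cost al be m A = F_norm al be m f"
    and \<epsilon>: "0 < \<epsilon>" "\<epsilon> \<le> 1"
    and M: "M_bound (dim_d TYPE('d)) al be (F_norm al be m f) \<epsilon> \<delta> \<le> real m"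
    and T: "real T \<le> T0_bound (real m) al be (F_norm al be m f) \<epsilon>"
    and "0 \<le> \<eta>" "\<eta> * real m \<le> c2 * \<epsilon>"
    and th: "th \<in> {..<m} \<rightarrow>\<^sub>E Lambda al be m" and "\<forall>t<T. X (js t) \<in> Gamma"
    and "\<forall>t\<le>T. \<forall>i<m. norm (sgd m th f \<eta> X js t i) \<le> K"
  shows "pinn_sgd_run m th f \<eta> X js T (real m powr (-al)) (real m powr (-be)) \<epsilon> (F_norm al be m f) c2 K"
proof
  define nf r s where "nf = F_norm al be m f" and "r = real m powr (-al)" and "s = real m powr (-be)"
  have m: "1 \<le> real m"
    using assms(4) by simp
  have nf: "0 \<le> nf"
    unfolding nf_def using F_cost_nonneg[OF adm(1)] adm(2) by simp
  show "0 < r" "r \<le> 1" "0 < s" "s \<le> 1"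
    unfolding r_def s_def using m assms(1,2) powr_mono[of _ 0 "real m"] by auto
  show "\<forall>i<m. \<bar>fst (th i)\<bar> \<le> r" "\<forall>i<m. \<bar>snd (snd (th i))\<bar> \<le> s"
    "\<forall>i<m. norm (W0 th i) + \<bar>snd (snd (th i))\<bar> \<le> (dim_d TYPE('d) + 1) * s"
    using Lambda_param_bounds[of "th _" al be m] th unfolding r_def s_def W0_def by auto
  show "\<forall>x\<in>Gamma. \<bar>f x\<bar> \<le> nf * (r * neuron_const TYPE('d) * ((dim_d TYPE('d) + 1) * s)^2)"
    unfolding nf_def r_def s_def using abs_le_F_cost[OF assms(4) adm(1)] adm(2) by simp
  show "real m * r * s^3 \<le> \<epsilon>" "nf * r * s^2 \<le> sqrt \<epsilon>"
    unfolding nf_def r_def s_def using assms(1-3) M \<epsilon>(1) nf[unfolded nf_def] m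
    by (intro small_init_if_M_bound_le[where d = "dim_d TYPE('d)" and \<delta> = \<delta>] dim_d_ge_1; simp)+
  show "real T * \<epsilon> * (r * s)^2 * max nf 1 \<le> 1"
    unfolding nf_def r_def s_def using T \<epsilon> nf[unfolded nf_def] m
    by (intro horizon_le_of_T0_bound) auto
  show "real T * \<epsilon> * r^2 \<le> real m"
    unfolding nf_def r_def using assms(1) T \<epsilon> nf[unfolded nf_def] m
    by (intro weighted_horizon_le_of_T0_bound) auto
qed (use assms F_cost_nonneg[OF adm(1)] in auto)

lemma expected_training_loss_le:
  fixes f :: "real^'d::finite \<Rightarrow> real" and D :: "(real^'d) measure"
  assumes "0 \<le> al" "0 \<le> be" "1 < al + 3 * be" "1 \<le> m" "1 \<le> N" "0 < c2"
    and "\<exists>A. F_admissible al be m f A \<and> F_cost al be m A = F_norm al be m f"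
    and D: "prob_space D" "AE x in D. x \<in> Gamma"
    and \<epsilon>: "0 < \<epsilon>" "\<epsilon> \<le> 1" and \<delta>: "0 \<le> \<delta>"
    and bounds: "M_bound (dim_d TYPE('d)) al be (F_norm al be m f) \<epsilon> \<delta> \<le> real m"
      "real T \<le> T0_bound (real m) al be (F_norm al be m f) \<epsilon>"
    and \<eta>: "0 \<le> \<eta>" "\<eta> * real m \<le> c2 * \<epsilon>"
    and no_explosion: "\<forall>th \<in> {..<m} \<rightarrow>\<^sub>E Lambda al be m. \<forall>X. (\<forall>n<N. X n \<in> Gamma) \<longrightarrow>
        (\<forall>js. (\<forall>t<T. js t < N) \<longrightarrow> (\<forall>t\<le>T.
           (\<forall>i<m. norm (sgd m th f \<eta> X js t i) \<le> K) \<and>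
           (\<forall>x\<in>Gamma. \<bar>psi m th (sgd m th f \<eta> X js t) x\<bar> \<le> K)))"
  shows "\<exists>E \<in> sets (init_measure al be m :: (nat \<Rightarrow> 'd param) measure).
    measure (init_measure al be m) E \<ge> 1 - \<delta> \<and> (\<forall>th\<in>E. E_X_sgd m th f \<eta> N T D \<le> loss_const TYPE('d) c2 K * \<epsilon>)"
proof -
  obtain A where adm: "F_admissible al be m f A" "F_cost al be m A = F_norm al be m f"
    using assms(7) by blast
  have L: "0 \<le> loss_const TYPE('d) c2 K * \<epsilon>"
    unfolding loss_const_def using \<epsilon> by simp
  have "E_X_sgd m th f \<eta> N T D \<le> loss_const TYPE('d) c2 K * \<epsilon>" if th: "th \<in> {..<m} \<rightarrow>\<^sub>E Lambda al be m" for th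
  proof (intro E_X_sgd_le[OF D L] allI impI E_sgd_le[OF assms(5) L] ballI train_loss_le[OF assms(5)])
    fix X :: "nat \<Rightarrow> real^'d" and js t n
    assume X: "\<forall>n<N. X n \<in> Gamma" and js: "js \<in> {..<T} \<rightarrow>\<^sub>E {..<N}" and "t < T" "n < N"
    have "pinn_sgd_run m th f \<eta> X js T (real m powr (-al)) (real m powr (-be)) \<epsilon> (F_norm al be m f) c2 K"
      by (rule pinn_sgd_run_of_scalings[where \<delta> = \<delta>])
        (use assms(1-6) adm \<epsilon> bounds \<eta> th X js no_explosion in \<open>auto simp: PiE_iff\<close>)
    then show "(psi m th (sgd m th f \<eta> X js t) (X n) - f (X n))^2 \<le> loss_const TYPE('d) c2 K * \<epsilon>"
      by (rule pinn_sgd_run.squared_error_le) (use \<open>t < T\<close> \<open>n < N\<close> X in auto)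
  qed
  then show ?thesis
    using init_measure_support[OF assms(4), of al be, where 'd='d] \<delta>
    by (intro bexI[of _ "{..<m} \<rightarrow>\<^sub>E Lambda al be m"]) auto
qed

theorem theorem3p4:
  fixes K c1 c2 :: real
  assumes "K \<ge> 1" and "0 < c1" and "c1 \<le> c2"
  shows "\<exists>C::real. \<forall>(al::real) (be::real) (m::nat) (f::real^'d::finite \<Rightarrow> real)
     (D::(real^'d) measure) (\<epsilon>::real) (\<delta>::real) (N::nat) (T::nat) (\<eta>::real).
     al \<ge> 0 \<longrightarrow> be \<ge> 0 \<longrightarrow> al + 3 * be > 1 \<longrightarrow> m \<ge> 1 \<longrightarrow> N \<ge> 1 \<longrightarrow>
     in_F al be m f \<longrightarrow>
     (\<exists>A. F_admissible al be m f A \<and> F_cost al be m A = F_norm al be m f) \<longrightarrow>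
     prob_space D \<longrightarrow> sets D = sets borel \<longrightarrow> (AE x in D. x \<in> Gamma) \<longrightarrow>
     0 < \<epsilon> \<longrightarrow> \<epsilon> \<le> 1 \<longrightarrow> 0 < \<delta> \<longrightarrow> \<delta> < 1 \<longrightarrow>
     real m \<ge> M_bound (dim_d TYPE('d)) al be (F_norm al be m f) \<epsilon> \<delta> \<longrightarrow>
     T0_bound (real m) al be (F_norm al be m f) \<epsilon> > (F_norm al be m f)^2 / \<epsilon>^2 \<longrightarrow>
     (F_norm al be m f)^2 / \<epsilon>^2 \<le> real T \<longrightarrow>
     real T \<le> T0_bound (real m) al be (F_norm al be m f) \<epsilon> \<longrightarrow>
     c1 * \<epsilon> / real m \<le> \<eta> \<longrightarrow> \<eta> \<le> c2 * \<epsilon> / real m \<longrightarrow>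
     (\<forall>th \<in> {..<m} \<rightarrow>\<^sub>E Lambda al be m. \<forall>X. (\<forall>n<N. X n \<in> Gamma) \<longrightarrow>
        (\<forall>js. (\<forall>t<T. js t < N) \<longrightarrow> (\<forall>t\<le>T.
           (\<forall>i<m. norm (sgd m th f \<eta> X js t i) \<le> K) \<and>
           (\<forall>x\<in>Gamma. \<bar>psi m th (sgd m th f \<eta> X js t) x\<bar> \<le> K)))) \<longrightarrow>
     (\<exists>E \<in> sets (init_measure al be m :: (nat \<Rightarrow> 'd param) measure).
        measure (init_measure al be m) E \<ge> 1 - \<delta> \<and>
        (\<forall>th\<in>E. E_X_sgd m th f \<eta> N T D \<le> C * \<epsilon>))"
proof (intro exI[of _ "loss_const TYPE('d) c2 K"] allI impI, goal_cases)
  case (1 al be m f D \<epsilon> \<delta> N T \<eta>)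
  then have "0 \<le> \<eta>" "\<eta> * real m \<le> c2 * \<epsilon>"
    using assms(2) order_trans[OF _ \<open>c1 * \<epsilon> / real m \<le> \<eta>\<close>] by (auto simp: field_simps)
  with 1 assms(2,3) show ?case
    by (intro expected_training_loss_le) auto
qed

end
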